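(* Let $\lambda$ be a partition with $n$ parts, let $\beta \in U_\lambda(n)$, and set $\delta := \Delta_\lambda(\beta)$. If $\beta \in UGC_\lambda(n)$, then $s_\lambda(\beta;x) = \det\big( h_{\lambda_j - j + i}(i, \delta_j; x) \big)_{i,j=1}^n$, the $n\times n$ determinant whose $(i,j)$ entry is $h_{\lambda_j - j + i}(i,\delta_j;x)$.
   Context: Fix an integer $n \geq 1$ and write $[k] = \{1,\dots,k\}$. A partition is $\lambda = (\lambda_1,\dots,\lambda_n)$ with $\lambda_1 \geq \dots \geq \lambda_n \geq 0$ integers. Let $R_\lambda \subseteq [n-1]$ be the set of $q \in [n-1]$ with $\lambda_q > \lambda_{q+1}$; write its elements $q_1 < \dots < q_r$, and set $q_0 := 0$, $q_{r+1} := n$. For $h \in [r+1]$ the $h$-th carrel is the index interval $\{q_{h-1}+1,\dots,q_h\}$. A $\lambda$-tuple is an $n$-tuple $\beta$ with entries in $[n]$, considered with this carrel structure; it is upper if $\beta_i \geq i$ for all $i$. $U_\lambda(n)$ is the set of upper $\lambda$-tuples. Critical indices: for $\beta \in U_\lambda(n)$ and $h \in [r+1]$, set $x_1 := q_h$; given $x_{u-1}$, if some index $x$ with $q_{h-1} < x < x_{u-1}$ satisfies $\beta_{x_{u-1}} - \beta_x > x_{u-1} - x$, let $x_u$ be the largest such $x$, otherwise stop. The $x_u$ are the critical indices of $\beta$ in carrel $h$; the pairs $(x_u,\beta_{x_u})$ form its critical list. For $i \in [n]$ let $x(i)$ be the smallest critical index in the carrel of $i$ with $x(i) \geq i$. The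 $\lambda$-core of $\beta$ is $\Delta_\lambda(\beta) := \delta$ with $\delta_i := \beta_{x(i)} - (x(i) - i)$. The critical list is a flag critical list if for every $h \in [r]$, $\beta_{q_h} \leq \beta_k$ where $k$ is the smallest critical index of $\beta$ in carrel $h+1$. $UGC_\lambda(n)$ is the set of $\beta \in U_\lambda(n)$ with flag critical list. A semistandard tableau of shape $\lambda$ is a filling of the Young diagram of $\lambda$ (row $i$ has $\lambda_i$ boxes) with values in $[n]$, weakly increasing along rows and strictly increasing down columns. For $\beta \in U_\lambda(n)$, $s_\lambda(\beta;x) := \sum_T \prod_{k=1}^n x_k^{\theta_k(T)}$, summed over the semistandard tableaux $T$ of shape $\lambda$ whose values in row $i$ are all at most $\beta_i$ (for every $i$), where $\theta_k(T)$ is the number of values of $T$ equal to $k$. For integers $u$, $i \geq 1$, $k \geq 1$: $h_u(i,k;x) := 0$ if $u < 0$, and otherwise $h_u(i,k;x) := \sum x_{t_1}\cdots x_{t_u}$ over $i \leq t_1 \leq \dots \leq t_u \leq k$ (so $h_0 = 1$). *)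

theory Defs
  imports "Jordan_Normal_Form.Determinant"
begin

text \<open>Conventions: n-tuples (lambda, beta) are functions nat => nat, only the values
at indices 1..n matter. Polynomials in x_1..x_n are rendered by their evaluations at an
arbitrary point x :: nat => 'a in an arbitrary commutative ring.\<close>

definition is_partition :: "nat \<Rightarrow> (nat \<Rightarrow> nat) \<Rightarrow> bool" where
  "is_partition n lam \<longleftrightarrow> (\<forall>i. 1 \<le> i \<and> i < n \<longrightarrow> lam (Suc i) \<le> lam i)"

definition Rset :: "nat \<Rightarrow> (nat \<Rightarrow> nat) \<Rightarrow> nat set" where
  "Rset n lam = {q. 1 \<le> q \<and> q \<le> n - 1 \<and> lam (Suc q) < lam q}"

text \<open>For an index i in [n], the carrel of i is {carrel_lo i + 1 .. carrel_hi i},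
i.e. carrel_lo i = q_(h-1) and carrel_hi i = q_h where q_(h-1) < i <= q_h.\<close>
definition carrel_lo :: "nat \<Rightarrow> (nat \<Rightarrow> nat) \<Rightarrow> nat \<Rightarrow> nat" where
  "carrel_lo n lam i = Max {q \<in> insert 0 (Rset n lam). q < i}"

definition carrel_hi :: "nat \<Rightarrow> (nat \<Rightarrow> nat) \<Rightarrow> nat \<Rightarrow> nat" where
  "carrel_hi n lam i = Min {q \<in> insert n (Rset n lam). i \<le> q}"

definition upper_tuples :: "nat \<Rightarrow> (nat \<Rightarrow> nat) set" where
  "upper_tuples n = {beta. \<forall>i. 1 \<le> i \<and> i \<le> n \<longrightarrow> beta i \<in> {1..n} \<and> i \<le> beta i}"

definition crit_cond :: "(nat \<Rightarrow> nat) \<Rightarrow> nat \<Rightarrow> nat \<Rightarrow> bool" where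
  "crit_cond beta y x \<longleftrightarrow> int (beta y) - int (beta x) > int y - int x"

inductive critical :: "(nat \<Rightarrow> nat) \<Rightarrow> nat \<Rightarrow> nat \<Rightarrow> nat \<Rightarrow> bool"
  for beta :: "nat \<Rightarrow> nat" and lo :: nat and hi :: nat where
  start: "critical beta lo hi hi"
| step: "critical beta lo hi y \<Longrightarrow> lo < x \<Longrightarrow> x < y \<Longrightarrow> crit_cond beta y x \<Longrightarrow>
         (\<forall>z. x < z \<and> z < y \<longrightarrow> \<not> crit_cond beta y z) \<Longrightarrow> critical beta lo hi x"

definition crit_above :: "nat \<Rightarrow> (nat \<Rightarrow> nat) \<Rightarrow> (nat \<Rightarrow> nat) \<Rightarrow> nat \<Rightarrow> nat" where
  "crit_above n lam beta i =
     (LEAST x. critical beta (carrel_lo n lam i) (carrel_hi n lam i) x \<and> i \<le> x)"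

definition core :: "nat \<Rightarrow> (nat \<Rightarrow> nat) \<Rightarrow> (nat \<Rightarrow> nat) \<Rightarrow> nat \<Rightarrow> nat" where
  "core n lam beta i = beta (crit_above n lam beta i) - (crit_above n lam beta i - i)"

definition UGC :: "nat \<Rightarrow> (nat \<Rightarrow> nat) \<Rightarrow> (nat \<Rightarrow> nat) set" where
  "UGC n lam = {beta \<in> upper_tuples n.
     \<forall>q \<in> Rset n lam.
       beta q \<le> beta (LEAST k. critical beta q (carrel_hi n lam (Suc q)) k)}"

definition shape :: "nat \<Rightarrow> (nat \<Rightarrow> nat) \<Rightarrow> (nat \<times> nat) set" where
  "shape n lam = {(i, j). 1 \<le> i \<and> i \<le> n \<and> 1 \<le> j \<and> j \<le> lam i}"

definition flagged_tableaux :: "nat \<Rightarrow> (nat \<Rightarrow> nat) \<Rightarrow> (nat \<Rightarrow> nat) \<Rightarrow> (nat \<Rightarrow> nat \<Rightarrow> nat) set" where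
  "flagged_tableaux n lam beta = {T.
     (\<forall>i j. (i, j) \<notin> shape n lam \<longrightarrow> T i j = 0) \<and>
     (\<forall>(i, j) \<in> shape n lam. T i j \<in> {1..n} \<and> T i j \<le> beta i) \<and>
     (\<forall>i j. (i, j) \<in> shape n lam \<and> (i, Suc j) \<in> shape n lam \<longrightarrow> T i j \<le> T i (Suc j)) \<and>
     (\<forall>i j. (i, j) \<in> shape n lam \<and> (Suc i, j) \<in> shape n lam \<longrightarrow> T i j < T (Suc i) j)}"

definition theta :: "nat \<Rightarrow> (nat \<Rightarrow> nat) \<Rightarrow> (nat \<Rightarrow> nat \<Rightarrow> nat) \<Rightarrow> nat \<Rightarrow> nat" where
  "theta n lam T k = card {(i, j) \<in> shape n lam. T i j = k}"

definition flagged_schur :: "nat \<Rightarrow> (nat \<Rightarrow> nat) \<Rightarrow> (nat \<Rightarrow> nat) \<Rightarrow> (nat \<Rightarrow> 'a::comm_ring_1) \<Rightarrow> 'a" where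
  "flagged_schur n lam beta x =
     (\<Sum>T \<in> flagged_tableaux n lam beta. \<Prod>k \<in> {1..n}. x k ^ theta n lam T k)"

definition hpoly :: "int \<Rightarrow> nat \<Rightarrow> nat \<Rightarrow> (nat \<Rightarrow> 'a::comm_ring_1) \<Rightarrow> 'a" where
  "hpoly u i k x = (if u < 0 then 0 else
     (\<Sum>ts \<in> {ts. length ts = nat u \<and> sorted ts \<and> set ts \<subseteq> {i..k}}. prod_list (map x ts)))"

end

theory Submission
  imports Defs "HOL-Library.Disjoint_Sets"
begin

text \<open>Replacing the flag \<open>\<beta>\<close> by \<open>\<epsilon>\<^sub>i = \<beta>\<^bsub>x(i)\<^esub>\<close> or by the core
  \<open>\<delta>\<^sub>i = \<epsilon>\<^sub>i - (x(i) - i)\<close> does not change the set of tableaux: by column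
  strictness the bound on row \<open>x(i)\<close> already forces the bound \<open>\<delta>\<^sub>i\<close> on row \<open>i\<close>, which has
  the same length. The flag critical list condition makes \<open>\<epsilon>\<close> weakly increasing, and for
  weakly increasing flags \<open>b\<close> one has the flagged Jacobi--Trudi identity
  \<open>s\<^sub>\<lambda>(b) = det h\<^bsub>\<lambda>\<^sub>j - j + i\<^esub>(1, b\<^sub>j)\<close>. It is proved by induction on the
  largest flag value \<open>N + 1\<close>: the entries \<open>N + 1\<close> of a tableau form a horizontal strip
  \<open>\<lambda>/\<nu>\<close> in the rows with flag \<open>N + 1\<close>, and on the determinant side expanding those
  columns by \<open>h(1, N + 1) = \<Sum>\<^sub>k x\<^bsub>N+1\<^esub>\<^sup>k h(1, N)\<close> produces all \<open>\<nu>\<close>, the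
  non-strips cancelling in pairs by swapping adjacent columns. Finally column operations turn
  \<open>\<epsilon>\<close> into \<open>\<delta>\<close> (where \<open>\<epsilon>\<^sub>i > \<delta>\<^sub>i\<close>, row \<open>i + 1\<close> lies in the same carrel and
  \<open>\<delta>\<^bsub>i+1\<^esub> = \<delta>\<^sub>i + 1\<close>), and row operations turn the lower bounds \<open>1\<close> into \<open>i\<close>,
  using \<open>\<delta>\<^sub>j \<ge> j\<close>.\<close>

section \<open>Complete homogeneous polynomials\<close>

definition sorted_lists :: "nat \<Rightarrow> nat \<Rightarrow> nat \<Rightarrow> nat list set" where
  "sorted_lists m i k = {ts. length ts = m \<and> sorted ts \<and> set ts \<subseteq> {i..k}}"

definition hcomplete :: "nat \<Rightarrow> nat \<Rightarrow> nat \<Rightarrow> (nat \<Rightarrow> 'a::comm_ring_1) \<Rightarrow> 'a" where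
  "hcomplete m i k x = (\<Sum>ts \<in> sorted_lists m i k. prod_list (map x ts))"

lemma finite_sorted_lists: "finite (sorted_lists m i k)"
  unfolding sorted_lists_def by (rule finite_subset[OF _ finite_lists_length_eq[of "{i..k}" m]]) auto

lemma sorted_lists_0: "sorted_lists 0 i k = {[]}"
  by (auto simp: sorted_lists_def)

lemma sorted_lists_Suc_empty: "k < i \<Longrightarrow> sorted_lists (Suc m) i k = {}"
  by (auto simp: sorted_lists_def length_Suc_conv)

lemma sorted_lists_Suc_top:
  assumes "i \<le> Suc k"
  shows "sorted_lists (Suc m) i (Suc k) = sorted_lists (Suc m) i k \<union> (\<lambda>ts. ts @ [Suc k]) ` sorted_lists m i (Suc k)"
proof (intro Set.set_eqI iffI)
  fix ts assume ts: "ts \<in> sorted_lists (Suc m) i (Suc k)"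
  show "ts \<in> sorted_lists (Suc m) i k \<union> (\<lambda>ts. ts @ [Suc k]) ` sorted_lists m i (Suc k)"
  proof (cases "Suc k \<in> set ts")
    case False
    hence "set ts \<subseteq> {i..k}" using ts by (auto simp: sorted_lists_def subset_iff le_Suc_eq)
    thus ?thesis using ts by (auto simp: sorted_lists_def)
  next
    case True
    have ne: "ts \<noteq> []" using True by auto
    have sorted: "sorted (butlast ts @ [last ts])" using ts ne by (simp add: sorted_lists_def)
    have "last ts = Suc k"
    proof (rule antisym)
      show "last ts \<le> Suc k" using ts last_in_set[OF ne] by (auto simp: sorted_lists_def)
      have "Suc k \<in> set (butlast ts @ [last ts])" using True ne by simp
      thus "Suc k \<le> last ts" using sorted by (auto simp: sorted_append)
    qed
    moreover have "butlast ts \<in> sorted_lists m i (Suc k)" using ts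
      by (auto simp: sorted_lists_def sorted_butlast dest: in_set_butlastD)
    ultimately have "ts \<in> (\<lambda>ts. ts @ [Suc k]) ` sorted_lists m i (Suc k)"
      using append_butlast_last_id[OF ne] by (metis image_eqI)
    thus ?thesis by blast
  qed
next
  fix ts assume "ts \<in> sorted_lists (Suc m) i k \<union> (\<lambda>ts. ts @ [Suc k]) ` sorted_lists m i (Suc k)"
  thus "ts \<in> sorted_lists (Suc m) i (Suc k)" using assms by (auto simp: sorted_lists_def sorted_append subset_iff)
qed

lemma sorted_lists_Suc_bottom:
  assumes "i \<le> k"
  shows "sorted_lists (Suc m) i k = sorted_lists (Suc m) (Suc i) k \<union> (\<lambda>ts. i # ts) ` sorted_lists m i k"
proof (intro Set.set_eqI iffI)
  fix ts assume ts: "ts \<in> sorted_lists (Suc m) i k"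
  then obtain a t where at: "ts = a # t" by (cases ts) (auto simp: sorted_lists_def)
  show "ts \<in> sorted_lists (Suc m) (Suc i) k \<union> (\<lambda>ts. i # ts) ` sorted_lists m i k"
  proof (cases "a = i")
    case False
    have "\<forall>y\<in>set ts. a \<le> y" "a \<in> {i..k}" "set ts \<subseteq> {i..k}" using ts at by (auto simp: sorted_lists_def)
    hence "set ts \<subseteq> {Suc i..k}" using False by fastforce
    thus ?thesis using ts by (auto simp: sorted_lists_def)
  next
    case True
    have "t \<in> sorted_lists m i k" using ts at by (auto simp: sorted_lists_def)
    thus ?thesis using at True by blast
  qed
next
  fix ts assume "ts \<in> sorted_lists (Suc m) (Suc i) k \<union> (\<lambda>ts. i # ts) ` sorted_lists m i k"
  thus "ts \<in> sorted_lists (Suc m) i k" using assms by (auto simp: sorted_lists_def subset_iff)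
qed

lemma hpoly_eq_hcomplete: "hpoly u i k x = (if u < 0 then 0 else hcomplete (nat u) i k x)"
  unfolding hpoly_def hcomplete_def sorted_lists_def by simp

lemma hcomplete_0[simp]: "hcomplete 0 i k x = 1"
  unfolding hcomplete_def sorted_lists_0 by simp

lemma hcomplete_Suc_empty: "k < i \<Longrightarrow> hcomplete (Suc m) i k x = 0"
  unfolding hcomplete_def by (simp add: sorted_lists_Suc_empty)

lemma hcomplete_Suc_top:
  assumes "i \<le> Suc k"
  shows "hcomplete (Suc m) i (Suc k) x = hcomplete (Suc m) i k x + x (Suc k) * hcomplete m i (Suc k) x"
proof -
  have "hcomplete (Suc m) i (Suc k) x = hcomplete (Suc m) i k x +
      (\<Sum>ts \<in> (\<lambda>ts. ts @ [Suc k]) ` sorted_lists m i (Suc k). prod_list (map x ts))"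
    unfolding hcomplete_def sorted_lists_Suc_top[OF assms]
    by (intro sum.union_disjoint finite_sorted_lists finite_imageI) (auto simp: sorted_lists_def)
  also have "(\<Sum>ts \<in> (\<lambda>ts. ts @ [Suc k]) ` sorted_lists m i (Suc k). prod_list (map x ts)) =
      x (Suc k) * hcomplete m i (Suc k) x"
    by (subst sum.reindex) (auto simp: inj_on_def hcomplete_def sum_distrib_left mult.commute)
  finally show ?thesis .
qed

lemma hcomplete_Suc_bottom:
  assumes "i \<le> k"
  shows "hcomplete (Suc m) i k x = hcomplete (Suc m) (Suc i) k x + x i * hcomplete m i k x"
proof -
  have "hcomplete (Suc m) i k x = hcomplete (Suc m) (Suc i) k x +
      (\<Sum>ts \<in> (\<lambda>ts. i # ts) ` sorted_lists m i k. prod_list (map x ts))"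
    unfolding hcomplete_def sorted_lists_Suc_bottom[OF assms]
    by (intro sum.union_disjoint finite_sorted_lists finite_imageI) (auto simp: sorted_lists_def)
  also have "(\<Sum>ts \<in> (\<lambda>ts. i # ts) ` sorted_lists m i k. prod_list (map x ts)) = x i * hcomplete m i k x"
    by (subst sum.reindex) (auto simp: inj_on_def hcomplete_def sum_distrib_left)
  finally show ?thesis .
qed

lemma hpoly_neg: "u < 0 \<Longrightarrow> hpoly u i k x = 0"
  by (simp add: hpoly_eq_hcomplete)

lemma hpoly_pos: "0 < u \<Longrightarrow> hpoly u i k x = hcomplete (Suc (nat (u - 1))) i k x"
  by (simp add: hpoly_eq_hcomplete Suc_nat_eq_nat_zadd1)

lemma hpoly_split_top:
  assumes "i \<le> Suc k"
  shows "hpoly u i (Suc k) x = hpoly u i k x + x (Suc k) * hpoly (u - 1) i (Suc k) x"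
proof (cases "0 < u")
  case True
  hence "hpoly (u - 1) i (Suc k) x = hcomplete (nat (u - 1)) i (Suc k) x" by (simp add: hpoly_eq_hcomplete)
  thus ?thesis using hcomplete_Suc_top[OF assms] True by (simp add: hpoly_pos)
qed (cases "u = 0", auto simp: hpoly_eq_hcomplete)

lemma hpoly_split_bottom:
  assumes "i \<le> k \<or> u \<noteq> 1"
  shows "hpoly u i k x = hpoly u (Suc i) k x + x i * hpoly (u - 1) i k x"
proof (cases "0 < u")
  case True
  hence u1: "hpoly (u - 1) i k x = hcomplete (nat (u - 1)) i k x" by (simp add: hpoly_eq_hcomplete)
  show ?thesis
  proof (cases "i \<le> k")
    case True thus ?thesis using hcomplete_Suc_bottom[OF True] \<open>0 < u\<close> u1 by (simp add: hpoly_pos)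
  next
    case False
    hence "0 < u - 1" using assms \<open>0 < u\<close> by auto
    thus ?thesis using False \<open>0 < u\<close> by (simp add: hpoly_pos hcomplete_Suc_empty)
  qed
qed (cases "u = 0", auto simp: hpoly_eq_hcomplete)

lemma hpoly_empty_range: "hpoly u (Suc i) 0 x = (if u = 0 then 1 else 0)"
  by (cases "0 < u") (simp_all add: hpoly_pos hcomplete_Suc_empty, auto simp: hpoly_eq_hcomplete)

lemma hpoly_Suc_top_expand_remainder:
  fixes x :: "nat \<Rightarrow> 'a::comm_ring_1"
  shows "hpoly m 1 (Suc N) x = (\<Sum>s\<in>{m - int d..m}. x (Suc N) ^ nat (m - s) * hpoly s 1 N x)
     + x (Suc N) ^ Suc d * hpoly (m - int d - 1) 1 (Suc N) x"
proof (induction d)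
  case 0
  show ?case using hpoly_split_top[of 1 N m x] by simp
next
  case (Suc d)
  let ?X = "x (Suc N)"
  define s1 where "s1 = m - int d - 1"
  define s2 where "s2 = s1 - 1"
  define F where "F s = ?X ^ nat (m - s) * hpoly s 1 N x" for s
  have e: "m - int (Suc d) = s1" "m - int (Suc d) - 1 = s2" "nat (m - s1) = Suc d"
    unfolding s1_def s2_def by simp_all
  have r: "hpoly s1 1 (Suc N) x = hpoly s1 1 N x + ?X * hpoly s2 1 (Suc N) x"
    using hpoly_split_top[of 1 N s1 x] unfolding s2_def by simp
  have ins: "{s1..m} = insert s1 {m - int d..m}" unfolding s1_def by auto
  have nin: "s1 \<notin> {m - int d..m}" unfolding s1_def by auto
  have sp: "sum F {s1..m} = F s1 + sum F {m - int d..m}"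
    unfolding ins by (rule sum.insert[OF _ nin]) simp
  have F1: "F s1 = ?X ^ Suc d * hpoly s1 1 N x" unfolding F_def e(3) ..
  have IH: "hpoly m 1 (Suc N) x = sum F {m - int d..m} + ?X ^ Suc d * hpoly s1 1 (Suc N) x"
    using Suc.IH unfolding F_def s1_def .
  have "hpoly m 1 (Suc N) x = sum F {s1..m} + ?X ^ Suc (Suc d) * hpoly s2 1 (Suc N) x"
    unfolding IH sp F1 r by (simp add: algebra_simps)
  thus ?case unfolding e F_def s2_def .
qed

lemma hpoly_Suc_top_expand:
  fixes x :: "nat \<Rightarrow> 'a::comm_ring_1"
  assumes "m \<le> K"
  shows "hpoly m 1 (Suc N) x = (\<Sum>s\<in>{m - K..m}. x (Suc N) ^ nat (m - s) * hpoly s 1 N x)"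
proof (cases "m < 0")
  case True
  have "(\<Sum>s\<in>{m - K..m}. x (Suc N) ^ nat (m - s) * hpoly s 1 N x) = 0"
    by (rule sum.neutral) (use True in \<open>auto simp: hpoly_neg\<close>)
  thus ?thesis using True by (simp add: hpoly_neg)
next
  case False
  hence K: "K = int (nat K)" using assms by simp
  show ?thesis using hpoly_Suc_top_expand_remainder[of m N x "nat K"] assms False
    by (subst (asm) hpoly_neg[of "m - int (nat K) - 1"]) (simp_all flip: K)
qed

lemma sum_int_interval_shift: "(\<Sum>s\<in>{l..u::int}. f s) = (\<Sum>t\<in>{l + c..u + c}. f (t - c))"
  by (rule sum.reindex_bij_witness[of _ "\<lambda>t. t - c" "\<lambda>s. s + c"]) auto

lemma hpoly_Suc_top_expand_shifted:
  fixes x :: "nat \<Rightarrow> 'a::comm_ring_1"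
  assumes "i < n"
  shows "hpoly (m - int a + int (Suc i)) 1 (Suc N) x =
    (\<Sum>t\<in>{int a - int n..m}. x (Suc N) ^ nat (m - t) * hpoly (t - int a + int (Suc i)) 1 N x)"
proof -
  let ?m = "m - int a + int (Suc i)" and ?c = "int a - int (Suc i)"
  have "hpoly ?m 1 (Suc N) x = (\<Sum>s\<in>{?m - (m - int a + int n)..?m}. x (Suc N) ^ nat (?m - s) * hpoly s 1 N x)"
    by (rule hpoly_Suc_top_expand) (use assms in simp)
  also have "\<dots> = (\<Sum>t\<in>{?m - (m - int a + int n) + ?c..?m + ?c}. x (Suc N) ^ nat (?m - (t - ?c)) * hpoly (t - ?c) 1 N x)"
    by (rule sum_int_interval_shift)
  also have "{?m - (m - int a + int n) + ?c..?m + ?c} = {int a - int n..m}" by simp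
  also have "(\<Sum>t\<in>{int a - int n..m}. x (Suc N) ^ nat (?m - (t - ?c)) * hpoly (t - ?c) 1 N x) =
      (\<Sum>t\<in>{int a - int n..m}. x (Suc N) ^ nat (m - t) * hpoly (t - int a + int (Suc i)) 1 N x)"
  proof (rule sum.cong[OF refl])
    fix t
    have "?m - (t - ?c) = m - t" "t - ?c = t - int a + int (Suc i)" by simp_all
    thus "x (Suc N) ^ nat (?m - (t - ?c)) * hpoly (t - ?c) 1 N x =
        x (Suc N) ^ nat (m - t) * hpoly (t - int a + int (Suc i)) 1 N x" by (simp only:)
  qed
  finally show ?thesis .
qed

section \<open>Carrels and critical indices\<close>

lemma finite_Rset: "finite (Rset n lam)"
  by (rule finite_subset[of _ "{..n}"]) (auto simp: Rset_def)

lemma Rset_bounds: "q \<in> Rset n lam \<Longrightarrow> 1 \<le> q \<and> q < n"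
  by (auto simp: Rset_def)

lemma is_partition_antimono:
  assumes "is_partition n lam" "1 \<le> a" "a \<le> b" "b \<le> n"
  shows "lam b \<le> lam a"
  using assms(3,4)
proof (induction b rule: dec_induct)
  case base thus ?case by simp
next
  case (step m)
  have "lam (Suc m) \<le> lam m" using assms(1,2) step unfolding is_partition_def by auto
  thus ?case using step by simp
qed

lemma carrel_lo_props:
  assumes "1 \<le> i"
  shows "carrel_lo n lam i < i" "carrel_lo n lam i = 0 \<or> carrel_lo n lam i \<in> Rset n lam"
    "\<And>q. q \<in> Rset n lam \<Longrightarrow> q < i \<Longrightarrow> q \<le> carrel_lo n lam i"
proof -
  let ?S = "{q \<in> insert 0 (Rset n lam). q < i}"
  have fin: "finite ?S" by (rule finite_subset[of _ "{..<i}"]) auto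
  have ne: "0 \<in> ?S" using assms by auto
  have mem: "Max ?S \<in> ?S" using Max_in[OF fin] ne by blast
  show "carrel_lo n lam i < i" using mem unfolding carrel_lo_def by simp
  show "carrel_lo n lam i = 0 \<or> carrel_lo n lam i \<in> Rset n lam" using mem unfolding carrel_lo_def by simp
  show "\<And>q. q \<in> Rset n lam \<Longrightarrow> q < i \<Longrightarrow> q \<le> carrel_lo n lam i"
    unfolding carrel_lo_def using fin by (intro Max_ge) auto
qed

lemma carrel_hi_props:
  assumes "i \<le> n"
  shows "i \<le> carrel_hi n lam i" "carrel_hi n lam i \<le> n"
    "carrel_hi n lam i = n \<or> carrel_hi n lam i \<in> Rset n lam"
    "\<And>q. q \<in> Rset n lam \<Longrightarrow> i \<le> q \<Longrightarrow> carrel_hi n lam i \<le> q"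
proof -
  let ?S = "{q \<in> insert n (Rset n lam). i \<le> q}"
  have fin: "finite ?S" using finite_Rset by auto
  have ne: "n \<in> ?S" using assms by auto
  have mem: "Min ?S \<in> ?S" using Min_in[OF fin] ne by blast
  show "i \<le> carrel_hi n lam i" using mem unfolding carrel_hi_def by simp
  show "carrel_hi n lam i \<le> n" unfolding carrel_hi_def using fin ne by (rule Min_le)
  show "carrel_hi n lam i = n \<or> carrel_hi n lam i \<in> Rset n lam" using mem unfolding carrel_hi_def by simp
  show "\<And>q. q \<in> Rset n lam \<Longrightarrow> i \<le> q \<Longrightarrow> carrel_hi n lam i \<le> q"
    unfolding carrel_hi_def using fin by (intro Min_le) auto
qed

lemma carrel_eq_within:
  assumes i: "1 \<le> i" "i \<le> n" and i': "carrel_lo n lam i < i'" "i' \<le> carrel_hi n lam i"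
  shows "carrel_lo n lam i' = carrel_lo n lam i" "carrel_hi n lam i' = carrel_hi n lam i"
proof -
  note L = carrel_lo_props[where i=i and n=n and lam=lam, OF i(1)] and Hh = carrel_hi_props[where i=i and n=n and lam=lam, OF i(2)]
  let ?S = "{q \<in> insert 0 (Rset n lam). q < i'}"
  have fin: "finite ?S" by (rule finite_subset[of _ "{..<i'}"]) auto
  have "Max ?S = carrel_lo n lam i"
  proof (rule Max_eqI[OF fin])
    show "carrel_lo n lam i \<in> ?S" using L(2) i' by auto
    fix y assume y: "y \<in> ?S"
    show "y \<le> carrel_lo n lam i"
    proof (cases "y = 0")
      case False
      hence yR: "y \<in> Rset n lam" "y < i'" using y by auto
      show ?thesis
      proof (cases "y < i")
        case True thus ?thesis using L(3) yR by blast
      next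
        case False thus ?thesis using Hh(4)[OF yR(1)] yR(2) i' by linarith
      qed
    qed simp
  qed
  thus "carrel_lo n lam i' = carrel_lo n lam i" unfolding carrel_lo_def .
  let ?T = "{q \<in> insert n (Rset n lam). i' \<le> q}"
  have finT: "finite ?T" using finite_Rset by auto
  have "Min ?T = carrel_hi n lam i"
  proof (rule Min_eqI[OF finT])
    show "carrel_hi n lam i \<in> ?T" using Hh(3) i' by auto
    fix y assume y: "y \<in> ?T"
    show "carrel_hi n lam i \<le> y"
    proof (cases "y = n")
      case False
      hence yR: "y \<in> Rset n lam" "i' \<le> y" using y by auto
      show ?thesis
      proof (cases "y < i")
        case True thus ?thesis using L(3)[OF yR(1)] yR(2) i' by linarith
      next
        case False thus ?thesis using Hh(4)[OF yR(1)] by simp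
      qed
    qed (use Hh in simp)
  qed
  thus "carrel_hi n lam i' = carrel_hi n lam i" unfolding carrel_hi_def .
qed

lemma partition_const_on_carrel:
  assumes P: "is_partition n lam" and i: "1 \<le> i" "i \<le> n"
    and j: "carrel_lo n lam i < j" "j \<le> carrel_hi n lam i"
  shows "lam j = lam (carrel_hi n lam i)"
proof -
  note L = carrel_lo_props[where i=i and n=n and lam=lam, OF i(1)] and Hh = carrel_hi_props[where i=i and n=n and lam=lam, OF i(2)]
  have step: "lam (Suc k) = lam k" if k: "carrel_lo n lam i < k" "k < carrel_hi n lam i" for k
  proof -
    have "k \<notin> Rset n lam"
    proof
      assume kR: "k \<in> Rset n lam"
      show False
      proof (cases "k < i")
        case True thus False using L(3)[OF kR] k by linarith
      next
        case False thus False using Hh(4)[OF kR] k by linarith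
      qed
    qed
    moreover have "1 \<le> k" "k \<le> n - 1" using k Hh(2) by auto
    ultimately have "\<not> lam (Suc k) < lam k" unfolding Rset_def by auto
    moreover have "lam (Suc k) \<le> lam k" using P \<open>1 \<le> k\<close> k Hh(2) unfolding is_partition_def by auto
    ultimately show ?thesis by simp
  qed
  obtain d where d: "carrel_hi n lam i = j + d" using j(2) le_Suc_ex by blast
  have "lam j = lam (j + d)" using d j
  proof (induction d arbitrary: j)
    case (Suc d)
    have "lam j = lam (Suc j)" using step[of j] Suc.prems by simp
    also have "\<dots> = lam (Suc j + d)" using Suc.IH[of "Suc j"] Suc.prems by simp
    finally show ?case by simp
  qed simp
  thus ?thesis using d by simp
qed

lemma carrel_hi_Rset: "q \<in> Rset n lam \<Longrightarrow> carrel_hi n lam q = q"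
  using carrel_hi_props[where i=q and n=n and lam=lam] Rset_bounds[of q n lam] by fastforce

lemma carrel_lo_Suc_Rset: assumes "q \<in> Rset n lam" shows "carrel_lo n lam (Suc q) = q"
proof -
  let ?S = "{y \<in> insert 0 (Rset n lam). y < Suc q}"
  have fin: "finite ?S" by (rule finite_subset[of _ "{..<Suc q}"]) auto
  have "Max ?S = q" by (rule Max_eqI[OF fin]) (use assms in auto)
  thus ?thesis unfolding carrel_lo_def .
qed

lemma carrel_Suc_notin_Rset:
  assumes "1 \<le> i" "i < n" "i \<notin> Rset n lam"
  shows "carrel_lo n lam (Suc i) = carrel_lo n lam i" "carrel_hi n lam (Suc i) = carrel_hi n lam i"
proof -
  have "carrel_hi n lam i \<noteq> i" using carrel_hi_props(3)[where i=i and n=n and lam=lam] assms by auto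
  hence "Suc i \<le> carrel_hi n lam i" using carrel_hi_props(1)[where i=i and n=n and lam=lam] assms by simp
  moreover have "carrel_lo n lam i < Suc i" using carrel_lo_props(1)[where i=i and n=n and lam=lam] assms by simp
  ultimately show "carrel_lo n lam (Suc i) = carrel_lo n lam i" "carrel_hi n lam (Suc i) = carrel_hi n lam i"
    using carrel_eq_within[of i n lam "Suc i"] assms by auto
qed


definition slack :: "(nat \<Rightarrow> nat) \<Rightarrow> nat \<Rightarrow> int" where "slack beta k = int (beta k) - int k"

lemma crit_cond_iff_slack: "crit_cond beta y x \<longleftrightarrow> slack beta x < slack beta y"
  unfolding crit_cond_def slack_def by auto

lemma critical_le_hi: "critical beta lo hi z \<Longrightarrow> z \<le> hi"
  by (induction rule: critical.induct) auto

lemma critical_gt_lo: "critical beta lo hi z \<Longrightarrow> lo < hi \<Longrightarrow> lo < z"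
  by (induction rule: critical.induct) auto

lemma critical_slack_less:
  assumes "critical beta lo hi z"
  shows "critical beta lo hi y \<Longrightarrow> z < y \<Longrightarrow> slack beta z < slack beta y"
  using assms
proof (induction arbitrary: y rule: critical.induct)
  case start
  thus ?case using critical_le_hi[OF start(1)] by simp
next
  case (step y' x y)
  have xy': "slack beta x < slack beta y'" using step(4) by (simp add: crit_cond_iff_slack)
  show ?case
  proof (cases y y' rule: linorder_cases)
    case less
    hence "\<not> crit_cond beta y' y" using step(5) step.prems(2) by auto
    thus ?thesis using xy' by (simp add: crit_cond_iff_slack)
  next
    case equal thus ?thesis using xy' by simp
  next
    case greater
    thus ?thesis using step.IH[OF step.prems(1)] xy' by simp
  qed
qed

lemma Least_critical_props:
  fixes beta :: "nat \<Rightarrow> nat"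
  assumes "lo < i" "i \<le> hi"
  defines "X \<equiv> LEAST z. critical beta lo hi z \<and> i \<le> z"
  shows "critical beta lo hi X" "i \<le> X" "X \<le> hi" "slack beta X \<le> slack beta i"
proof -
  have ex: "critical beta lo hi hi \<and> i \<le> hi" using assms by (auto intro: critical.start)
  have X: "critical beta lo hi X \<and> i \<le> X" unfolding X_def by (rule LeastI[where P="\<lambda>z. critical beta lo hi z \<and> i \<le> z", OF ex])
  thus "critical beta lo hi X" "i \<le> X" by auto
  thus "X \<le> hi" using critical_le_hi by blast
  show "slack beta X \<le> slack beta i"
  proof (rule ccontr)
    assume "\<not> slack beta X \<le> slack beta i"
    hence cc: "crit_cond beta X i" by (simp add: crit_cond_iff_slack)
    hence iX: "i < X" using X by (cases "i = X") (auto simp: crit_cond_iff_slack)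
    let ?S = "{z. lo < z \<and> z < X \<and> crit_cond beta X z}"
    have fin: "finite ?S" by (rule finite_subset[of _ "{..<X}"]) auto
    have iS: "i \<in> ?S" using assms(1) iX cc by auto
    define z0 where "z0 = Max ?S"
    have z0S: "z0 \<in> ?S" unfolding z0_def using Max_in[OF fin] iS by blast
    have iz0: "i \<le> z0" unfolding z0_def using Max_ge[OF fin iS] .
    have nz: "\<forall>z. z0 < z \<and> z < X \<longrightarrow> \<not> crit_cond beta X z"
    proof (intro allI impI)
      fix z assume z: "z0 < z \<and> z < X"
      show "\<not> crit_cond beta X z"
      proof
        assume "crit_cond beta X z"
        hence "z \<in> ?S" using z z0S by auto
        hence "z \<le> z0" unfolding z0_def using Max_ge[OF fin] by blast
        thus False using z by simp
      qed
    qed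
    have "critical beta lo hi z0"
      by (rule critical.step[of _ _ _ X]) (use X z0S nz in auto)
    hence "X \<le> z0" unfolding X_def using iz0 by (intro Least_le) auto
    thus False using z0S by simp
  qed
qed

definition crit_flag :: "nat \<Rightarrow> (nat \<Rightarrow> nat) \<Rightarrow> (nat \<Rightarrow> nat) \<Rightarrow> nat \<Rightarrow> nat" where
  "crit_flag n lam beta i = beta (crit_above n lam beta i)"

lemma crit_above_props:
  assumes "1 \<le> i" "i \<le> n"
  shows "critical beta (carrel_lo n lam i) (carrel_hi n lam i) (crit_above n lam beta i)"
    "i \<le> crit_above n lam beta i" "crit_above n lam beta i \<le> carrel_hi n lam i"
    "slack beta (crit_above n lam beta i) \<le> slack beta i" "crit_above n lam beta i \<le> n"
proof -
  have a: "carrel_lo n lam i < i" "i \<le> carrel_hi n lam i" "carrel_hi n lam i \<le> n"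
    using carrel_lo_props[where i=i and n=n and lam=lam] carrel_hi_props[where i=i and n=n and lam=lam] assms by auto
  note C = Least_critical_props[OF a(1,2), where beta=beta]
  show "critical beta (carrel_lo n lam i) (carrel_hi n lam i) (crit_above n lam beta i)"
    "i \<le> crit_above n lam beta i" "crit_above n lam beta i \<le> carrel_hi n lam i"
    "slack beta (crit_above n lam beta i) \<le> slack beta i"
    using C unfolding crit_above_def by auto
  thus "crit_above n lam beta i \<le> n" using a by linarith
qed

lemma carrel_crit_above:
  assumes "1 \<le> i" "i \<le> n"
  shows "carrel_lo n lam (crit_above n lam beta i) = carrel_lo n lam i"
    "carrel_hi n lam (crit_above n lam beta i) = carrel_hi n lam i"
proof -
  have "carrel_lo n lam i < crit_above n lam beta i"
    using carrel_lo_props(1)[where i=i and n=n and lam=lam] crit_above_props(2)[where lam=lam and beta=beta, OF assms] assms by linarith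
  thus "carrel_lo n lam (crit_above n lam beta i) = carrel_lo n lam i"
    "carrel_hi n lam (crit_above n lam beta i) = carrel_hi n lam i"
    using carrel_eq_within[OF assms] crit_above_props(3)[where lam=lam and beta=beta, OF assms] by auto
qed

lemma crit_above_idem:
  assumes "1 \<le> i" "i \<le> n"
  shows "crit_above n lam beta (crit_above n lam beta i) = crit_above n lam beta i"
proof -
  let ?X = "crit_above n lam beta i"
  show ?thesis unfolding crit_above_def[of n lam beta ?X] carrel_crit_above[OF assms]
    by (rule Least_equality) (use crit_above_props(1)[where lam=lam and beta=beta, OF assms] in auto)
qed

lemma partition_crit_above:
  assumes P: "is_partition n lam" and "1 \<le> i" "i \<le> n"
  shows "lam (crit_above n lam beta i) = lam i"
proof -
  have lo: "carrel_lo n lam i < i" "carrel_lo n lam i < crit_above n lam beta i"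
    using carrel_lo_props(1)[where i=i and n=n and lam=lam] crit_above_props(2)[where lam=lam and beta=beta, OF assms(2,3)] assms by auto
  have "lam (crit_above n lam beta i) = lam (carrel_hi n lam i)"
    by (rule partition_const_on_carrel[OF P assms(2,3) lo(2) crit_above_props(3)[OF assms(2,3)]])
  also have "\<dots> = lam i"
    by (rule partition_const_on_carrel[OF P assms(2,3) lo(1) carrel_hi_props(1)[OF assms(3)], symmetric])
  finally show ?thesis .
qed

lemma crit_above_Suc:
  assumes P: "is_partition n lam" and i: "1 \<le> i" "i \<le> n" and lt: "i < crit_above n lam beta i"
  shows "Suc i \<le> n" "crit_above n lam beta (Suc i) = crit_above n lam beta i" "lam (Suc i) = lam i"
proof -
  note X = crit_above_props[where lam=lam and beta=beta, OF i]
  show "Suc i \<le> n" using X(5) lt by simp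
  have lo: "carrel_lo n lam i < Suc i" using carrel_lo_props(1)[where i=i and n=n and lam=lam] i by simp
  have hi: "Suc i \<le> carrel_hi n lam i" using X(3) lt by simp
  note S = carrel_eq_within[OF i lo hi]
  show "crit_above n lam beta (Suc i) = crit_above n lam beta i"
    unfolding crit_above_def[of n lam beta "Suc i"] S
  proof (rule Least_equality)
    show "critical beta (carrel_lo n lam i) (carrel_hi n lam i) (crit_above n lam beta i) \<and>
      Suc i \<le> crit_above n lam beta i" using X(1) lt by simp
    fix y assume "critical beta (carrel_lo n lam i) (carrel_hi n lam i) y \<and> Suc i \<le> y"
    thus "crit_above n lam beta i \<le> y" unfolding crit_above_def by (intro Least_le) auto
  qed
  have l1: "lam (Suc i) = lam (carrel_hi n lam i)" by (rule partition_const_on_carrel[OF P i lo hi])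
  have l2: "lam i = lam (carrel_hi n lam i)"
    by (rule partition_const_on_carrel[OF P i carrel_lo_props(1)[OF i(1)] carrel_hi_props(1)[OF i(2)]])
  show "lam (Suc i) = lam i" using l1 l2 by simp
qed

lemma upper_tuplesD: "beta \<in> upper_tuples n \<Longrightarrow> 1 \<le> k \<Longrightarrow> k \<le> n \<Longrightarrow> k \<le> beta k \<and> beta k \<le> n \<and> 1 \<le> beta k"
  unfolding upper_tuples_def by auto

section \<open>Flagged tableaux\<close>

lemma mem_shape_iff: "(i, j) \<in> shape n lam \<longleftrightarrow> 1 \<le> i \<and> i \<le> n \<and> 1 \<le> j \<and> j \<le> lam i"
  unfolding shape_def by auto

lemma finite_shape: "finite (shape n lam)"
proof -
  have "shape n lam = Sigma {1..n} (\<lambda>i. {1..lam i})" unfolding shape_def by auto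
  thus ?thesis by simp
qed

lemma finite_flagged_tableaux: "finite (flagged_tableaux n lam f)"
proof -
  let ?S = "{g. \<forall>p. (p \<in> shape n lam \<longrightarrow> g p \<in> {0..n}) \<and> (p \<notin> shape n lam \<longrightarrow> g p = (0::nat))}"
  have fS: "finite ?S" by (rule finite_set_of_finite_funs) (auto simp: finite_shape)
  have "flagged_tableaux n lam f \<subseteq> curry ` ?S"
  proof
    fix T assume T: "T \<in> flagged_tableaux n lam f"
    have "case_prod T \<in> ?S" using T unfolding flagged_tableaux_def by auto
    moreover have "T = curry (case_prod T)" by simp
    ultimately show "T \<in> curry ` ?S" by blast
  qed
  thus ?thesis by (rule finite_subset) (use fS in auto)
qed

lemma mem_flagged_tableaux_iff: "T \<in> flagged_tableaux n mu f \<longleftrightarrow>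
     (\<forall>i j. (i, j) \<notin> shape n mu \<longrightarrow> T i j = 0) \<and>
     (\<forall>i j. (i, j) \<in> shape n mu \<longrightarrow> T i j \<in> {1..n}) \<and>
     (\<forall>i j. (i, j) \<in> shape n mu \<longrightarrow> T i j \<le> f i) \<and>
     (\<forall>i j. (i, j) \<in> shape n mu \<and> (i, Suc j) \<in> shape n mu \<longrightarrow> T i j \<le> T i (Suc j)) \<and>
     (\<forall>i j. (i, j) \<in> shape n mu \<and> (Suc i, j) \<in> shape n mu \<longrightarrow> T i j < T (Suc i) j)"
  unfolding flagged_tableaux_def by auto

lemma flagged_tableau_weight:
  assumes T: "T \<in> flagged_tableaux n lam f"
  shows "(\<Prod>k\<in>{1..n}. x k ^ theta n lam T k) = (\<Prod>p\<in>shape n lam. x (T (fst p) (snd p)))"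
proof -
  have img: "(\<lambda>p. T (fst p) (snd p)) ` shape n lam \<subseteq> {1..n}" using T unfolding flagged_tableaux_def by auto
  have "(\<Prod>p\<in>shape n lam. x (T (fst p) (snd p))) =
    (\<Prod>k\<in>{1..n}. \<Prod>p\<in>{p. p \<in> shape n lam \<and> T (fst p) (snd p) = k}. x (T (fst p) (snd p)))"
    by (rule prod.group[symmetric, OF finite_shape _ img]) simp
  also have "\<dots> = (\<Prod>k\<in>{1..n}. x k ^ theta n lam T k)"
  proof (rule prod.cong[OF refl])
    fix k
    have "(\<Prod>p\<in>{p. p \<in> shape n lam \<and> T (fst p) (snd p) = k}. x (T (fst p) (snd p))) =
       (\<Prod>p\<in>{p. p \<in> shape n lam \<and> T (fst p) (snd p) = k}. x k)" by (rule prod.cong) auto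
    also have "\<dots> = x k ^ card {p. p \<in> shape n lam \<and> T (fst p) (snd p) = k}" by simp
    also have "card {p. p \<in> shape n lam \<and> T (fst p) (snd p) = k} = theta n lam T k"
    proof -
      have "{p. p \<in> shape n lam \<and> T (fst p) (snd p) = k} = {(i, j) \<in> shape n lam. T i j = k}" by auto
      thus ?thesis unfolding theta_def by simp
    qed
    finally show "(\<Prod>p\<in>{p. p \<in> shape n lam \<and> T (fst p) (snd p) = k}. x (T (fst p) (snd p))) = x k ^ theta n lam T k" .
  qed
  finally show ?thesis by simp
qed

lemma flagged_schur_box_prod: "flagged_schur n lam f x = (\<Sum>T\<in>flagged_tableaux n lam f. \<Prod>p\<in>shape n lam. x (T (fst p) (snd p)))"
  unfolding flagged_schur_def by (rule sum.cong[OF refl]) (rule flagged_tableau_weight)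

lemma flagged_tableau_row_mono:
  assumes T: "T \<in> flagged_tableaux n lam f" and i: "1 \<le> i" "i \<le> n" and c: "1 \<le> c" "c \<le> c'" "c' \<le> lam i"
  shows "T i c \<le> T i c'"
  using c(2,3)
proof (induction c' rule: dec_induct)
  case base thus ?case by simp
next
  case (step m)
  have "(i, m) \<in> shape n lam" "(i, Suc m) \<in> shape n lam" using i c step by (auto simp: mem_shape_iff)
  hence "T i m \<le> T i (Suc m)" using T unfolding flagged_tableaux_def by blast
  thus ?case using step by simp
qed

lemma flagged_tableau_col_gap:
  assumes T: "T \<in> flagged_tableaux n lam f" and P: "is_partition n lam"
    and "1 \<le> i" "i \<le> k" "k \<le> n" "1 \<le> c" "c \<le> lam k"
  shows "T i c + (k - i) \<le> T k c"
  using assms(4-7)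
proof (induction k rule: dec_induct)
  case base thus ?case by simp
next
  case (step k)
  have a: "lam (Suc k) \<le> lam k" using P step assms(3) unfolding is_partition_def by auto
  have "(k, c) \<in> shape n lam" "(Suc k, c) \<in> shape n lam" using step a assms(3) by (auto simp: mem_shape_iff)
  hence "T k c < T (Suc k) c" using T unfolding flagged_tableaux_def by blast
  moreover have "T i c + (k - i) \<le> T k c" using step a by simp
  ultimately show ?case using step(1) by simp
qed

lemma flagged_tableaux_flag_eq:
  assumes P: "is_partition n lam"
    and le: "\<And>i. 1 \<le> i \<Longrightarrow> i \<le> n \<Longrightarrow> g i \<le> f i"
    and ex: "\<And>i. 1 \<le> i \<Longrightarrow> i \<le> n \<Longrightarrow> \<exists>k. i \<le> k \<and> k \<le> n \<and> lam k = lam i \<and> f k \<le> g i + (k - i)"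
  shows "flagged_tableaux n lam f = flagged_tableaux n lam g"
proof (intro Set.set_eqI iffI)
  fix T assume T: "T \<in> flagged_tableaux n lam f"
  have "\<forall>(i, j)\<in>shape n lam. T i j \<le> g i"
  proof (intro ballI, clarify)
    fix i j assume ij: "(i, j) \<in> shape n lam"
    hence ij': "1 \<le> i" "i \<le> n" "1 \<le> j" "j \<le> lam i" by (auto simp: mem_shape_iff)
    obtain k where k: "i \<le> k" "k \<le> n" "lam k = lam i" "f k \<le> g i + (k - i)" using ex[OF ij'(1,2)] by blast
    have "T i j + (k - i) \<le> T k j" using flagged_tableau_col_gap[OF T P ij'(1) k(1,2) ij'(3)] k(3) ij'(4) by simp
    moreover have "T k j \<le> f k" using T ij' k unfolding flagged_tableaux_def by (auto simp: mem_shape_iff)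
    ultimately show "T i j \<le> g i" using k(4) by simp
  qed
  thus "T \<in> flagged_tableaux n lam g" using T unfolding flagged_tableaux_def by auto
next
  fix T assume T: "T \<in> flagged_tableaux n lam g"
  have "\<forall>(i, j)\<in>shape n lam. T i j \<le> f i"
  proof (intro ballI, clarify)
    fix i j assume ij: "(i, j) \<in> shape n lam"
    hence "T i j \<le> g i" "1 \<le> i" "i \<le> n" using T unfolding flagged_tableaux_def by (auto simp: mem_shape_iff)
    thus "T i j \<le> f i" using le by fastforce
  qed
  thus "T \<in> flagged_tableaux n lam f" using T unfolding flagged_tableaux_def by auto
qed

text \<open>Column strictness turns the bound \<open>\<beta>\<^bsub>x(i)\<^esub>\<close> on row \<open>x(i)\<close>, which has
  the same length as row \<open>i\<close>, into the bound \<open>\<delta>\<^sub>i\<close> on row \<open>i\<close>.\<close>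
lemma flagged_tableaux_core:
  assumes P: "is_partition n lam" and U: "beta \<in> upper_tuples n"
  shows "flagged_tableaux n lam beta = flagged_tableaux n lam (core n lam beta)"
    "flagged_tableaux n lam (crit_flag n lam beta) = flagged_tableaux n lam (core n lam beta)"
proof -
  have X: "1 \<le> i \<Longrightarrow> i \<le> n \<Longrightarrow> crit_above n lam beta i \<le> beta (crit_above n lam beta i)
     \<and> i \<le> crit_above n lam beta i \<and> crit_above n lam beta i \<le> n
     \<and> slack beta (crit_above n lam beta i) \<le> slack beta i \<and> lam (crit_above n lam beta i) = lam i" for i
    using crit_above_props[where i=i and n=n and lam=lam and beta=beta] upper_tuplesD[OF U, of "crit_above n lam beta i"] partition_crit_above[OF P, of i beta] by auto
  show "flagged_tableaux n lam beta = flagged_tableaux n lam (core n lam beta)"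
  proof (rule flagged_tableaux_flag_eq[OF P])
    fix i assume i: "1 \<le> i" "i \<le> n"
    show "core n lam beta i \<le> beta i" using X[OF i] unfolding core_def slack_def by linarith
    show "\<exists>k\<ge>i. k \<le> n \<and> lam k = lam i \<and> beta k \<le> core n lam beta i + (k - i)"
      by (rule exI[of _ "crit_above n lam beta i"]) (use X[OF i] in \<open>auto simp: core_def\<close>)
  qed
  show "flagged_tableaux n lam (crit_flag n lam beta) = flagged_tableaux n lam (core n lam beta)"
  proof (rule flagged_tableaux_flag_eq[OF P])
    fix i assume i: "1 \<le> i" "i \<le> n"
    show "core n lam beta i \<le> crit_flag n lam beta i" unfolding core_def crit_flag_def by simp
    show "\<exists>k\<ge>i. k \<le> n \<and> lam k = lam i \<and> crit_flag n lam beta k \<le> core n lam beta i + (k - i)"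
      by (rule exI[of _ "crit_above n lam beta i"]) (use X[OF i] crit_above_idem[OF i, of lam beta] in \<open>auto simp: core_def crit_flag_def\<close>)
  qed
qed

lemma flagged_schur_crit_flag:
  assumes P: "is_partition n lam" and U: "beta \<in> upper_tuples n"
  shows "flagged_schur n lam beta x = flagged_schur n lam (crit_flag n lam beta) x"
  unfolding flagged_schur_def flagged_tableaux_core[OF P U] ..

lemma crit_flag_le:
  assumes U: "beta \<in> upper_tuples n" and "1 \<le> i" "i \<le> n"
  shows "crit_flag n lam beta i \<le> n"
  using crit_above_props[where lam=lam and beta=beta, OF assms(2,3)] upper_tuplesD[OF U, of "crit_above n lam beta i"] assms(2)
  unfolding crit_flag_def by auto

lemma core_ge:
  assumes U: "beta \<in> upper_tuples n" and "1 \<le> i" "i \<le> n"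
  shows "i \<le> core n lam beta i"
  using crit_above_props[where lam=lam and beta=beta, OF assms(2,3)] upper_tuplesD[OF U, of "crit_above n lam beta i"] assms(2)
  unfolding core_def by auto

text \<open>Within a carrel the slack \<open>\<beta>\<^sub>k - k\<close> strictly increases with the index along
  the critical list; across carrels monotonicity is exactly the flag critical list condition.\<close>
lemma crit_flag_mono:
  assumes P: "is_partition n lam" and G: "beta \<in> UGC n lam" and i: "1 \<le> i" "i < n"
  shows "crit_flag n lam beta i \<le> crit_flag n lam beta (Suc i)"
proof (cases "i \<in> Rset n lam")
  case True
  have hi: "carrel_hi n lam i = i" using carrel_hi_Rset[OF True] .
  have xi: "crit_above n lam beta i = i" using crit_above_props(2,3)[where i=i and n=n and lam=lam and beta=beta] i hi by auto
  have lo: "carrel_lo n lam (Suc i) = i" using carrel_lo_Suc_Rset[OF True] .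
  have in_carrel: "Suc i \<le> carrel_hi n lam (Suc i)" using carrel_hi_props(1)[where i="Suc i" and n=n and lam=lam] i by simp
  have eq: "(\<lambda>z. critical beta i (carrel_hi n lam (Suc i)) z \<and> Suc i \<le> z) =
            (\<lambda>z. critical beta i (carrel_hi n lam (Suc i)) z)"
    using critical_gt_lo[of beta i "carrel_hi n lam (Suc i)"] in_carrel by (force simp: fun_eq_iff)
  have "crit_above n lam beta (Suc i) = (LEAST k. critical beta i (carrel_hi n lam (Suc i)) k)"
    unfolding crit_above_def lo eq ..
  moreover have "beta i \<le> beta (LEAST k. critical beta i (carrel_hi n lam (Suc i)) k)"
    using G True unfolding UGC_def by auto
  ultimately show ?thesis unfolding crit_flag_def xi by simp
next
  case False
  note S = carrel_Suc_notin_Rset[OF i False]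
  have i': "1 \<le> Suc i" "Suc i \<le> n" using i by auto
  note X1 = crit_above_props[where lam=lam and beta=beta, OF i(1) less_imp_le[OF i(2)]]
  note X2 = crit_above_props[where lam=lam and beta=beta, OF i']
  have crit2: "critical beta (carrel_lo n lam i) (carrel_hi n lam i) (crit_above n lam beta (Suc i))"
    using X2(1) S by simp
  have le: "crit_above n lam beta i \<le> crit_above n lam beta (Suc i)"
    unfolding crit_above_def[of n lam beta i] using crit2 X2(2) by (intro Least_le) auto
  show ?thesis
  proof (cases "crit_above n lam beta i = crit_above n lam beta (Suc i)")
    case True thus ?thesis unfolding crit_flag_def by simp
  next
    case False
    hence "slack beta (crit_above n lam beta i) < slack beta (crit_above n lam beta (Suc i))"
      using critical_slack_less[OF X1(1) crit2] le by simp
    thus ?thesis unfolding crit_flag_def slack_def using le by linarith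
  qed
qed

section \<open>Jacobi--Trudi determinants\<close>

lemma det_mat_zero_col:
  fixes f :: "nat \<Rightarrow> nat \<Rightarrow> 'a::comm_ring_1"
  assumes k: "k < n" and z: "\<And>i. i < n \<Longrightarrow> f i k = 0"
  shows "det (mat n n (\<lambda>(i,j). f i j)) = 0"
proof -
  let ?M = "mat n n (\<lambda>(i,j). f i j)"
  have "det ?M = (\<Sum>p\<in>{p. p permutes {0..<n}}. signof p * (\<Prod>i = 0..<n. ?M $$ (i, p i)))"
    unfolding det_def by simp
  also have "\<dots> = 0"
  proof (rule sum.neutral, rule ballI)
    fix p assume "p \<in> {p. p permutes {0..<n}}"
    hence p: "p permutes {0..<n}" by simp
    have i0: "inv_into UNIV p k \<in> {0..<n}" using permutes_in_image[OF permutes_inv[OF p]] k by simp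
    have pi0: "p (inv_into UNIV p k) = k" using permutes_inverses(1)[OF p] .
    have "(\<Prod>i = 0..<n. ?M $$ (i, p i)) = 0"
    proof (rule prod_zero)
      show "\<exists>i\<in>{0..<n}. ?M $$ (i, p i) = 0"
        using i0 pi0 k z[of "inv_into UNIV p k"] by (intro bexI[OF _ i0]) simp
    qed simp
    thus "signof p * (\<Prod>i = 0..<n. ?M $$ (i, p i)) = 0" by simp
  qed
  finally show ?thesis .
qed

lemma prod_permutes_split_col:
  fixes n k :: nat
  assumes p: "p permutes {0..<n}" and k: "k < n"
  shows "(\<Prod>i=0..<n. (if p i = k then a i else b i)) = a (inv_into UNIV p k) * (\<Prod>i\<in>{0..<n} - {inv_into UNIV p k}. b i)"
proof -
  have i0: "inv_into UNIV p k \<in> {0..<n}" using permutes_in_image[OF permutes_inv[OF p]] k by simp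
  have pi0: "p (inv_into UNIV p k) = k" using permutes_inverses(1)[OF p] .
  have ne: "p i \<noteq> k" if "i \<in> {0..<n} - {inv_into UNIV p k}" for i
    using that pi0 permutes_inj[OF p] by (metis DiffE injD singletonI)
  have "(\<Prod>i=0..<n. (if p i = k then a i else b i)) =
      (if p (inv_into UNIV p k) = k then a (inv_into UNIV p k) else b (inv_into UNIV p k)) * (\<Prod>i\<in>{0..<n} - {inv_into UNIV p k}. (if p i = k then a i else b i))"
    by (rule prod.remove[OF _ i0]) simp
  also have "(\<Prod>i\<in>{0..<n} - {inv_into UNIV p k}. (if p i = k then a i else b i)) = (\<Prod>i\<in>{0..<n} - {inv_into UNIV p k}. b i)"
    by (rule prod.cong) (use ne in auto)
  finally show ?thesis using pi0 by simp
qed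

lemma det_mat_col_sum:
  fixes k n :: nat
  assumes k: "k < n" and S: "finite S"
  shows "det (mat n n (\<lambda>(i,j). if j = k then (\<Sum>t\<in>S. w t * v t i) else f i j)) =
    (\<Sum>t\<in>S. w t * det (mat n n (\<lambda>(i,j). if j = k then v t i else f i j)))"
proof -
  let ?P = "{p. p permutes {0..<n}}"
  let ?Q = "\<lambda>p. (\<Prod>i\<in>{0..<n} - {inv_into UNIV p k}. f i (p i))"
  have L: "det (mat n n (\<lambda>(i,j). if j = k then g i else f i j)) =
     (\<Sum>p\<in>?P. signof p * (g (inv_into UNIV p k) * ?Q p))" for g
  proof -
    have "det (mat n n (\<lambda>(i,j). if j = k then g i else f i j)) =
      (\<Sum>p\<in>?P. signof p * (\<Prod>i=0..<n. mat n n (\<lambda>(i,j). if j = k then g i else f i j) $$ (i, p i)))"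
      unfolding det_def by simp
    also have "\<dots> = (\<Sum>p\<in>?P. signof p * (g (inv_into UNIV p k) * ?Q p))"
    proof (rule sum.cong[OF refl])
      fix p assume "p \<in> ?P"
      hence p: "p permutes {0..<n}" by simp
      have "(\<Prod>i=0..<n. mat n n (\<lambda>(i,j). if j = k then g i else f i j) $$ (i, p i)) =
        (\<Prod>i=0..<n. (if p i = k then g i else f i (p i)))"
        by (rule prod.cong) (use permutes_in_image[OF p] in auto)
      thus "signof p * (\<Prod>i=0..<n. mat n n (\<lambda>(i,j). if j = k then g i else f i j) $$ (i, p i)) =
        signof p * (g (inv_into UNIV p k) * ?Q p)" using prod_permutes_split_col[OF p k, of g "\<lambda>i. f i (p i)"] by simp
    qed
    finally show ?thesis .
  qed
  have "det (mat n n (\<lambda>(i,j). if j = k then (\<Sum>t\<in>S. w t * v t i) else f i j)) =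
     (\<Sum>p\<in>?P. signof p * ((\<Sum>t\<in>S. w t * v t (inv_into UNIV p k)) * ?Q p))"
    by (rule L)
  also have "\<dots> = (\<Sum>p\<in>?P. \<Sum>t\<in>S. w t * (signof p * (v t (inv_into UNIV p k) * ?Q p)))"
    by (simp add: sum_distrib_left sum_distrib_right mult.assoc mult.left_commute)
  also have "\<dots> = (\<Sum>t\<in>S. w t * (\<Sum>p\<in>?P. signof p * (v t (inv_into UNIV p k) * ?Q p)))"
    by (subst sum.swap) (simp add: sum_distrib_left)
  also have "\<dots> = (\<Sum>t\<in>S. w t * det (mat n n (\<lambda>(i,j). if j = k then v t i else f i j)))"
    by (simp add: L)
  finally show ?thesis .
qed

text \<open>Rows and columns are indexed from \<open>0\<close>, whereas \<open>\<mu>\<close> and the flag \<open>c\<close> are indexed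
  from \<open>1\<close> as in the statement; row \<open>i\<close> uses the lower bound \<open>low i\<close>.\<close>
definition jt_mat :: "nat \<Rightarrow> (nat \<Rightarrow> nat) \<Rightarrow> (nat \<Rightarrow> int) \<Rightarrow> (nat \<Rightarrow> nat) \<Rightarrow> (nat \<Rightarrow> 'a::comm_ring_1) \<Rightarrow> 'a mat" where
  "jt_mat n low mu c x = mat n n (\<lambda>(i,j). hpoly (mu (Suc j) - int (Suc j) + int (Suc i)) (low i) (c (Suc j)) x)"

lemma jt_mat_dim[simp]: "dim_row (jt_mat n low mu c x) = n" "dim_col (jt_mat n low mu c x) = n" unfolding jt_mat_def by simp_all

lemma jt_mat_index: "i < n \<Longrightarrow> j < n \<Longrightarrow> jt_mat n low mu c x $$ (i,j) = hpoly (mu (Suc j) - int (Suc j) + int (Suc i)) (low i) (c (Suc j)) x"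
  unfolding jt_mat_def by simp

lemma jt_mat_cong:
  assumes "\<And>i. i < n \<Longrightarrow> low i = low' i" "\<And>j. 1 \<le> j \<Longrightarrow> j \<le> n \<Longrightarrow> mu j = mu' j"
    "\<And>j. 1 \<le> j \<Longrightarrow> j \<le> n \<Longrightarrow> c j = c' j"
  shows "jt_mat n low mu c x = jt_mat n low' mu' c' x"
  unfolding jt_mat_def by (rule cong_mat) (use assms in auto)

lemma det_jt_mat_flag_Suc:
  assumes t: "1 \<le> t" "t < n" and mu: "mu (Suc t) = mu t" and c: "c (Suc t) = Suc (c t)"
  shows "det (jt_mat n (\<lambda>_. 1) mu (c(t := Suc (c t))) x) = det (jt_mat n (\<lambda>_. 1) mu c x)"
proof -
  have "jt_mat n (\<lambda>_. 1) mu (c(t := Suc (c t))) x = addcol (x (Suc (c t))) (t - 1) t (jt_mat n (\<lambda>_. 1) mu c x)"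
  proof (rule eq_matI)
    fix i j assume ij: "i < dim_row (addcol (x (Suc (c t))) (t - 1) t (jt_mat n (\<lambda>_. 1) mu c x))"
      "j < dim_col (addcol (x (Suc (c t))) (t - 1) t (jt_mat n (\<lambda>_. 1) mu c x))"
    hence ij': "i < n" "j < n" by auto
    show "jt_mat n (\<lambda>_. 1) mu (c(t := Suc (c t))) x $$ (i, j) =
          addcol (x (Suc (c t))) (t - 1) t (jt_mat n (\<lambda>_. 1) mu c x) $$ (i, j)"
    proof (cases "j = t - 1")
      case True
      hence sj: "Suc j = t" using t by simp
      have "hpoly (mu t - int t + int (Suc i)) 1 (Suc (c t)) x =
        hpoly (mu t - int t + int (Suc i)) 1 (c t) x + x (Suc (c t)) * hpoly (mu t - int t + int (Suc i) - 1) 1 (Suc (c t)) x"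
        by (rule hpoly_split_top) simp
      moreover have "mu t - int t + int (Suc i) - 1 = mu (Suc t) - int (Suc t) + int (Suc i)" using mu by simp
      ultimately show ?thesis using ij' t True sj c by (simp add: jt_mat_index)
    next
      case False
      hence "Suc j \<noteq> t" using t by auto
      thus ?thesis using ij' False by (simp add: jt_mat_index)
    qed
  qed auto
  also have "det \<dots> = det (jt_mat n (\<lambda>_. 1) mu c x)"
    by (rule det_addcol) (use t in auto)
  finally show ?thesis .
qed

text \<open>The flags are raised from \<open>dl\<close> to \<open>ep\<close> one unit at a time; raising column \<open>i\<close>
  adds a multiple of column \<open>i + 1\<close>, which at that moment has the same part of \<open>\<mu>\<close> and a
  flag larger by one.\<close>
lemma det_jt_mat_flag_reduce:
  assumes le: "\<And>i. 1 \<le> i \<Longrightarrow> i \<le> n \<Longrightarrow> dl i \<le> ep i \<and> ep i \<le> dl i + n"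
    and st: "\<And>i. 1 \<le> i \<Longrightarrow> i \<le> n \<Longrightarrow> dl i < ep i \<Longrightarrow>
         Suc i \<le> n \<and> mu (Suc i) = mu i \<and> dl (Suc i) = Suc (dl i) \<and> ep (Suc i) = ep i"
  shows "det (jt_mat n (\<lambda>_. 1) mu dl x) = det (jt_mat n (\<lambda>_. 1) mu ep x)"
proof -
  define c where "c r i = min (ep i) (dl i + r)" for r i
  define d where "d r s i = (if i < s then c (Suc r) i else c r i)" for r s i
  let ?F = "\<lambda>f. det (jt_mat n (\<lambda>_. 1) mu f x)"
  have step: "?F (c (Suc r)) = ?F (c r)" for r
  proof -
    have "?F (d r s) = ?F (c r)" for s
    proof (induction s)
      case 0 thus ?case unfolding d_def by simp
    next
      case (Suc s)
      show ?case
      proof (cases "1 \<le> s \<and> s \<le> n \<and> c (Suc r) s \<noteq> c r s")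
        case False
        have "jt_mat n (\<lambda>_. 1) mu (d r (Suc s)) x = jt_mat n (\<lambda>_. 1) mu (d r s) x"
          by (rule jt_mat_cong) (use False in \<open>auto simp: d_def less_Suc_eq\<close>)
        thus ?thesis using Suc by simp
      next
        case True
        hence s: "1 \<le> s" "s \<le> n" and lt: "dl s + r < ep s" and ne: "c (Suc r) s \<noteq> c r s"
          unfolding c_def by auto
        have lt2: "dl s < ep s" using lt by simp
        note S = st[OF s lt2]
        have crs: "c r s = dl s + r" "c (Suc r) s = Suc (dl s + r)" using lt unfolding c_def by auto
        have dss: "d r s s = dl s + r" using crs unfolding d_def by simp
        have dsS: "d r s (Suc s) = Suc (d r s s)" using S lt dss unfolding d_def c_def by auto
        have eq: "d r (Suc s) = (d r s)(s := Suc (d r s s))"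
          using crs dss unfolding d_def by (auto simp: fun_eq_iff)
        have "?F (d r (Suc s)) = ?F (d r s)"
          unfolding eq by (rule det_jt_mat_flag_Suc) (use s S dsS in auto)
        thus ?thesis using Suc by simp
      qed
    qed
    hence "?F (d r (Suc n)) = ?F (c r)" .
    moreover have "jt_mat n (\<lambda>_. 1) mu (d r (Suc n)) x = jt_mat n (\<lambda>_. 1) mu (c (Suc r)) x"
      by (rule jt_mat_cong) (auto simp: d_def)
    ultimately show ?thesis by simp
  qed
  have all: "?F (c r) = ?F (c 0)" for r by (induction r) (use step in auto)
  have "jt_mat n (\<lambda>_. 1) mu (c 0) x = jt_mat n (\<lambda>_. 1) mu dl x"
    by (rule jt_mat_cong) (use le in \<open>auto simp: c_def\<close>)
  moreover have "jt_mat n (\<lambda>_. 1) mu (c n) x = jt_mat n (\<lambda>_. 1) mu ep x"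
    by (rule jt_mat_cong) (use le in \<open>auto simp: c_def\<close>)
  ultimately show ?thesis using all[of n] by simp
qed

lemma det_jt_mat_crit_flag_core:
  assumes P: "is_partition n lam" and U: "beta \<in> upper_tuples n"
  shows "det (jt_mat n (\<lambda>_. 1) (\<lambda>j. int (lam j)) (crit_flag n lam beta) x) =
    det (jt_mat n (\<lambda>_. 1) (\<lambda>j. int (lam j)) (core n lam beta) x)"
proof (rule det_jt_mat_flag_reduce[symmetric])
  fix i assume i: "1 \<le> i" "i \<le> n"
  note X = crit_above_props[where lam=lam and beta=beta, OF i]
  have u: "crit_above n lam beta i \<le> beta (crit_above n lam beta i)"
    using upper_tuplesD[OF U, of "crit_above n lam beta i"] X i by auto
  show "core n lam beta i \<le> crit_flag n lam beta i \<and> crit_flag n lam beta i \<le> core n lam beta i + n"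
    unfolding core_def crit_flag_def using X u by auto
  assume lt: "core n lam beta i < crit_flag n lam beta i"
  hence ix: "i < crit_above n lam beta i" using X u unfolding core_def crit_flag_def by auto
  show "Suc i \<le> n \<and> int (lam (Suc i)) = int (lam i) \<and> core n lam beta (Suc i) = Suc (core n lam beta i)
      \<and> crit_flag n lam beta (Suc i) = crit_flag n lam beta i"
    using crit_above_Suc[OF P i ix] ix u unfolding core_def crit_flag_def by auto
qed

lemma jt_mat_lower_row_step:
  assumes r: "1 \<le> r" "r < n" and l: "l \<le> r" and low: "low r = Suc l" "low (r - 1) = l"
    and mu: "\<And>j. 1 \<le> j \<Longrightarrow> j \<le> n \<Longrightarrow> 0 \<le> mu j"
    and dl: "\<And>j. 1 \<le> j \<Longrightarrow> j \<le> n \<Longrightarrow> j \<le> dl j"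
  shows "jt_mat n (low(r := l)) mu dl x = addrow (x l) r (r - 1) (jt_mat n low mu dl x)"
proof (rule eq_matI)
  fix i j assume "i < dim_row (addrow (x l) r (r - 1) (jt_mat n low mu dl x))"
    "j < dim_col (addrow (x l) r (r - 1) (jt_mat n low mu dl x))"
  hence ij: "i < n" "j < n" by auto
  show "jt_mat n (low(r := l)) mu dl x $$ (i, j) = addrow (x l) r (r - 1) (jt_mat n low mu dl x) $$ (i, j)"
  proof (cases "i = r")
    case True
    let ?u = "mu (Suc j) - int (Suc j) + int (Suc r)"
    have "l \<le> dl (Suc j) \<or> ?u \<noteq> 1"
    proof (cases "?u = 1")
      case True
      have "0 \<le> mu (Suc j)" using mu ij by simp
      hence "r \<le> Suc j" using True by simp
      thus ?thesis using dl[of "Suc j"] ij l by simp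
    qed simp
    hence h: "hpoly ?u l (dl (Suc j)) x = hpoly ?u (Suc l) (dl (Suc j)) x + x l * hpoly (?u - 1) l (dl (Suc j)) x"
      by (rule hpoly_split_bottom)
    have u1: "?u - 1 = mu (Suc j) - int (Suc j) + int (Suc (r - 1))" using r by simp
    have "jt_mat n low mu dl x $$ (r - 1, j) = hpoly (?u - 1) l (dl (Suc j)) x"
      unfolding u1 using jt_mat_index[of "r - 1" n j low mu dl x] r ij low by simp
    moreover have "jt_mat n low mu dl x $$ (r, j) = hpoly ?u (Suc l) (dl (Suc j)) x"
      using jt_mat_index[of r n j low mu dl x] r ij low by simp
    moreover have "jt_mat n (low(r := l)) mu dl x $$ (r, j) = hpoly ?u l (dl (Suc j)) x"
      using jt_mat_index[of r n j "low(r := l)" mu dl x] r ij by simp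
    ultimately show ?thesis using True ij r h by (simp add: add.commute)
  next
    case False
    thus ?thesis using ij by (simp add: jt_mat_index)
  qed
qed auto

text \<open>The lower bounds \<open>1\<close> are raised to the row indices one unit at a time: with bound
  \<open>l\<close> in row \<open>r\<close>, the row equals the row with bound \<open>l + 1\<close> plus \<open>x\<^sub>l\<close> times row
  \<open>r - 1\<close>, which at that moment has bound \<open>l\<close>.\<close>
lemma det_jt_mat_lower_index:
  assumes n: "1 \<le> n"
    and mu: "\<And>j. 1 \<le> j \<Longrightarrow> j \<le> n \<Longrightarrow> 0 \<le> mu j"
    and dl: "\<And>j. 1 \<le> j \<Longrightarrow> j \<le> n \<Longrightarrow> j \<le> dl j"
  shows "det (jt_mat n Suc mu dl x) = det (jt_mat n (\<lambda>_. 1) mu dl x)"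
proof -
  define lowS where "lowS l i = min (Suc i) l" for l i :: nat
  define lowT where "lowT l r i = (if i < r then min (Suc i) l else min (Suc i) (Suc l))" for l r i :: nat
  let ?F = "\<lambda>lw. det (jt_mat n lw mu dl x)"
  have stepT: "?F (lowT l r) = ?F (lowT l 0)" if l: "1 \<le> l" for l r
  proof (induction r)
    case (Suc r)
    show ?case
    proof (cases "l \<le> r \<and> r < n")
      case False
      have "jt_mat n (lowT l (Suc r)) mu dl x = jt_mat n (lowT l r) mu dl x"
        by (rule jt_mat_cong) (use False in \<open>auto simp: lowT_def\<close>)
      thus ?thesis using Suc by simp
    next
      case True
      hence r: "l \<le> r" "r < n" "1 \<le> r" using l by auto
      have "lowT l (Suc r) = (lowT l r)(r := l)" using r by (auto simp: lowT_def fun_eq_iff)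
      moreover have "jt_mat n ((lowT l r)(r := l)) mu dl x = addrow (x l) r (r - 1) (jt_mat n (lowT l r) mu dl x)"
        by (rule jt_mat_lower_row_step) (use r mu dl in \<open>auto simp: lowT_def\<close>)
      ultimately have "jt_mat n (lowT l (Suc r)) mu dl x = addrow (x l) r (r - 1) (jt_mat n (lowT l r) mu dl x)"
        by simp
      also have "det \<dots> = det (jt_mat n (lowT l r) mu dl x)"
        by (rule det_addrow[where n=n]) (use r in auto)
      finally show ?thesis using Suc by simp
    qed
  qed simp
  have stepS: "?F (lowS l) = ?F (lowS (Suc l))" if l: "1 \<le> l" for l
  proof -
    have "jt_mat n (lowT l n) mu dl x = jt_mat n (lowS l) mu dl x"
      by (rule jt_mat_cong) (auto simp: lowT_def lowS_def)
    moreover have "jt_mat n (lowT l 0) mu dl x = jt_mat n (lowS (Suc l)) mu dl x"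
      by (rule jt_mat_cong) (auto simp: lowT_def lowS_def)
    ultimately show ?thesis using stepT[OF l, of n] by simp
  qed
  have "?F (lowS 1) = ?F (lowS (Suc k))" for k
  proof (induction k)
    case (Suc k) thus ?case using stepS[of "Suc k"] by simp
  qed simp
  from this[of "n - 1"] have "?F (lowS 1) = ?F (lowS n)" using n by simp
  moreover have "jt_mat n (lowS 1) mu dl x = jt_mat n (\<lambda>_. 1) mu dl x"
    by (rule jt_mat_cong) (auto simp: lowS_def)
  moreover have "jt_mat n (lowS n) mu dl x = jt_mat n Suc mu dl x"
    by (rule jt_mat_cong) (auto simp: lowS_def)
  ultimately show ?thesis by simp
qed

section \<open>Expanding the columns with the largest flag\<close>

text \<open>The lower bound \<open>j - n\<close> only discards tuples whose column \<open>j\<close> vanishes.\<close>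
definition reduced_tuples :: "nat \<Rightarrow> nat set \<Rightarrow> (nat \<Rightarrow> int) \<Rightarrow> (nat \<Rightarrow> int) set" where
  "reduced_tuples n J mu = {nu. \<forall>j. (j \<in> J \<longrightarrow> int j - int n \<le> nu j \<and> nu j \<le> mu j) \<and> (j \<notin> J \<longrightarrow> nu j = mu j)}"

lemma finite_reduced_tuples: assumes "finite J" shows "finite (reduced_tuples n J mu)"
proof -
  have "reduced_tuples n J mu \<subseteq> (\<lambda>g j. if j \<in> J then g j else mu j) ` (PiE J (\<lambda>j. {int j - int n..mu j}))"
  proof
    fix nu assume nu: "nu \<in> reduced_tuples n J mu"
    let ?g = "restrict nu J"
    have "?g \<in> PiE J (\<lambda>j. {int j - int n..mu j})" using nu unfolding reduced_tuples_def by auto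
    moreover have "nu = (\<lambda>j. if j \<in> J then ?g j else mu j)" using nu unfolding reduced_tuples_def by (auto simp: fun_eq_iff)
    ultimately show "nu \<in> (\<lambda>g j. if j \<in> J then g j else mu j) ` (PiE J (\<lambda>j. {int j - int n..mu j}))" by blast
  qed
  thus ?thesis by (rule finite_subset) (use assms in \<open>auto intro!: finite_PiE\<close>)
qed

lemma det_jt_mat_expand_col:
  fixes x :: "nat \<Rightarrow> 'a::comm_ring_1"
  assumes a: "1 \<le> a" "a \<le> n" and c: "c a = Suc N"
  shows "det (jt_mat n (\<lambda>_. 1) mu c x) =
    (\<Sum>t\<in>{int a - int n..mu a}. x (Suc N) ^ nat (mu a - t) * det (jt_mat n (\<lambda>_. 1) (mu(a := t)) (c(a := N)) x))"
proof -
  let ?v = "\<lambda>t i. hpoly (t - int a + int (Suc i)) 1 N x"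
  let ?f = "\<lambda>i j. hpoly (mu (Suc j) - int (Suc j) + int (Suc i)) 1 (c (Suc j)) x"
  let ?I = "{int a - int n..mu a}"
  have k: "a - 1 < n" and sa: "Suc (a - 1) = a" using a by simp_all
  have M: "jt_mat n (\<lambda>_. 1) mu c x =
      mat n n (\<lambda>(i,j). if j = a - 1 then (\<Sum>t\<in>?I. x (Suc N) ^ nat (mu a - t) * ?v t i) else ?f i j)"
    unfolding jt_mat_def
  proof (rule cong_mat[OF refl refl], clarify)
    fix i j assume i: "i < n" and "j < n"
    show "hpoly (mu (Suc j) - int (Suc j) + int (Suc i)) 1 (c (Suc j)) x =
      (if j = a - 1 then (\<Sum>t\<in>?I. x (Suc N) ^ nat (mu a - t) * ?v t i) else ?f i j)"
    proof (cases "j = a - 1")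
      case True
      hence "Suc j = a" using sa by simp
      thus ?thesis using True c hpoly_Suc_top_expand_shifted[OF i, of "mu a" a N x] by (simp only: if_True simp_thms)
    qed (simp only: if_False)
  qed
  have "det (jt_mat n (\<lambda>_. 1) mu c x) =
      (\<Sum>t\<in>?I. x (Suc N) ^ nat (mu a - t) * det (mat n n (\<lambda>(i,j). if j = a - 1 then ?v t i else ?f i j)))"
    unfolding M by (rule det_mat_col_sum[OF k]) simp
  also have "\<dots> = (\<Sum>t\<in>?I. x (Suc N) ^ nat (mu a - t) * det (jt_mat n (\<lambda>_. 1) (mu(a := t)) (c(a := N)) x))"
  proof (rule sum.cong[OF refl])
    fix t
    have "mat n n (\<lambda>(i,j). if j = a - 1 then ?v t i else ?f i j) = jt_mat n (\<lambda>_. 1) (mu(a := t)) (c(a := N)) x"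
      unfolding jt_mat_def
    proof (rule cong_mat[OF refl refl], clarify)
      fix i j assume "i < n" "j < n"
      show "(if j = a - 1 then ?v t i else ?f i j) =
        hpoly ((mu(a := t)) (Suc j) - int (Suc j) + int (Suc i)) 1 ((c(a := N)) (Suc j)) x"
        using a by (cases "j = a - 1") auto
    qed
    thus "x (Suc N) ^ nat (mu a - t) * det (mat n n (\<lambda>(i,j). if j = a - 1 then ?v t i else ?f i j)) =
      x (Suc N) ^ nat (mu a - t) * det (jt_mat n (\<lambda>_. 1) (mu(a := t)) (c(a := N)) x)" by simp
  qed
  finally show ?thesis .
qed

lemma reduced_tuples_insert:
  assumes "a \<notin> J"
  shows "reduced_tuples n (insert a J) mu = (\<Union>t\<in>{int a - int n..mu a}. reduced_tuples n J (mu(a := t)))"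
proof (intro Set.set_eqI iffI)
  fix nu assume "nu \<in> reduced_tuples n (insert a J) mu"
  hence "nu a \<in> {int a - int n..mu a}" "nu \<in> reduced_tuples n J (mu(a := nu a))"
    using assms unfolding reduced_tuples_def by auto
  thus "nu \<in> (\<Union>t\<in>{int a - int n..mu a}. reduced_tuples n J (mu(a := t)))" by blast
next
  fix nu assume "nu \<in> (\<Union>t\<in>{int a - int n..mu a}. reduced_tuples n J (mu(a := t)))"
  thus "nu \<in> reduced_tuples n (insert a J) mu"
    using assms unfolding reduced_tuples_def by (auto split: if_splits)
qed

lemma det_jt_mat_expand:
  fixes x :: "nat \<Rightarrow> 'a::comm_ring_1"
  assumes J: "finite J" "J \<subseteq> {1..n}" and c: "\<forall>j\<in>J. c j = Suc N"
  shows "det (jt_mat n (\<lambda>_. 1) mu c x) =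
    (\<Sum>nu\<in>reduced_tuples n J mu. (\<Prod>j\<in>J. x (Suc N) ^ nat (mu j - nu j)) *
        det (jt_mat n (\<lambda>_. 1) nu (\<lambda>j. if j \<in> J then N else c j) x))"
  using J c
proof (induction J arbitrary: mu c rule: finite_induct)
  case empty
  have "reduced_tuples n {} mu = {mu}" unfolding reduced_tuples_def by (auto simp: fun_eq_iff)
  thus ?case by simp
next
  case (insert a J)
  let ?X = "x (Suc N)"
  let ?c' = "\<lambda>j. if j \<in> insert a J then N else c j"
  let ?I = "{int a - int n..mu a}"
  let ?G = "\<lambda>nu. (\<Prod>j\<in>insert a J. ?X ^ nat (mu j - nu j)) * det (jt_mat n (\<lambda>_. 1) nu ?c' x)"
  have a: "1 \<le> a" "a \<le> n" and ca: "c a = Suc N" using insert by auto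
  have "det (jt_mat n (\<lambda>_. 1) mu c x) = (\<Sum>t\<in>?I. ?X ^ nat (mu a - t) * det (jt_mat n (\<lambda>_. 1) (mu(a := t)) (c(a := N)) x))"
    by (rule det_jt_mat_expand_col[where c=c and a=a and N=N, OF a ca])
  also have "\<dots> = (\<Sum>t\<in>?I. \<Sum>nu\<in>reduced_tuples n J (mu(a := t)). ?G nu)"
  proof (rule sum.cong[OF refl])
    fix t
    have "det (jt_mat n (\<lambda>_. 1) (mu(a := t)) (c(a := N)) x) =
      (\<Sum>nu\<in>reduced_tuples n J (mu(a := t)). (\<Prod>j\<in>J. ?X ^ nat ((mu(a := t)) j - nu j)) *
        det (jt_mat n (\<lambda>_. 1) nu (\<lambda>j. if j \<in> J then N else (c(a := N)) j) x))"
      by (rule insert.IH) (use insert in auto)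
    moreover have "(\<lambda>j. if j \<in> J then N else (c(a := N)) j) = ?c'" by (auto simp: fun_eq_iff)
    ultimately have IH: "det (jt_mat n (\<lambda>_. 1) (mu(a := t)) (c(a := N)) x) =
      (\<Sum>nu\<in>reduced_tuples n J (mu(a := t)). (\<Prod>j\<in>J. ?X ^ nat ((mu(a := t)) j - nu j)) * det (jt_mat n (\<lambda>_. 1) nu ?c' x))"
      by simp
    have "?X ^ nat (mu a - t) * ((\<Prod>j\<in>J. ?X ^ nat ((mu(a := t)) j - nu j)) * det (jt_mat n (\<lambda>_. 1) nu ?c' x)) = ?G nu"
      if nu: "nu \<in> reduced_tuples n J (mu(a := t))" for nu
    proof -
      have nua: "nu a = t" using nu insert(2) unfolding reduced_tuples_def by auto
      have "(\<Prod>j\<in>J. ?X ^ nat ((mu(a := t)) j - nu j)) = (\<Prod>j\<in>J. ?X ^ nat (mu j - nu j))"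
        by (rule prod.cong) (use insert(2) in auto)
      thus ?thesis using insert(1,2) nua by (simp add: mult.assoc)
    qed
    thus "?X ^ nat (mu a - t) * det (jt_mat n (\<lambda>_. 1) (mu(a := t)) (c(a := N)) x) =
        (\<Sum>nu\<in>reduced_tuples n J (mu(a := t)). ?G nu)"
      unfolding IH sum_distrib_left by (rule sum.cong[OF refl])
  qed
  also have "\<dots> = (\<Sum>nu\<in>reduced_tuples n (insert a J) mu. ?G nu)"
    unfolding reduced_tuples_insert[OF insert(2)]
    by (rule sum.UNION_disjoint[symmetric])
      (simp, use insert(1) finite_reduced_tuples in blast, use insert(2) in \<open>auto simp: reduced_tuples_def\<close>)
  finally show ?case .
qed

lemma sum_cong_two_points:
  assumes "finite J" "a \<in> J" "b \<in> J" "a \<noteq> b" "\<forall>j\<in>J - {a, b}. f j = g j" "f a + f b = g a + g b"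
  shows "sum f J = (sum g J :: 'b::comm_monoid_add)"
proof -
  have sub: "{a, b} \<subseteq> J" using assms by auto
  have "sum f J = sum f (J - {a, b}) + sum f {a, b}" by (rule sum.subset_diff[OF sub assms(1)])
  also have "sum f (J - {a, b}) = sum g (J - {a, b})" by (rule sum.cong) (use assms in auto)
  also have "sum f {a, b} = sum g {a, b}" using assms by simp
  also have "sum g (J - {a, b}) + sum g {a, b} = sum g J" by (rule sum.subset_diff[OF sub assms(1), symmetric])
  finally show ?thesis .
qed

text \<open>\<open>\<lambda>/\<nu>\<close> is a horizontal strip in the rows \<open>J\<close> iff there is no defect
  \<open>\<nu>\<^sub>j < \<lambda>\<^bsub>j+1\<^esub>\<close>.\<close>
definition strip_defects :: "nat \<Rightarrow> (nat \<Rightarrow> nat) \<Rightarrow> nat set \<Rightarrow> (nat \<Rightarrow> int) \<Rightarrow> nat set" where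
  "strip_defects n lam J nu = {j \<in> J. j < n \<and> nu j < int (lam (Suc j))}"

text \<open>At the first defect \<open>j\<^sub>0\<close> exchange the columns \<open>j\<^sub>0\<close> and \<open>j\<^sub>0 + 1\<close> of the
  Jacobi--Trudi matrix: a sign-reversing involution on the non-strips.\<close>
definition defect_swap :: "nat \<Rightarrow> (nat \<Rightarrow> nat) \<Rightarrow> nat set \<Rightarrow> (nat \<Rightarrow> int) \<Rightarrow> (nat \<Rightarrow> int)" where
  "defect_swap n lam J nu = (let j0 = Min (strip_defects n lam J nu) in nu(j0 := nu (Suc j0) - 1, Suc j0 := nu j0 + 1))"

lemma first_strip_defect:
  assumes P: "is_partition n lam" and J: "J \<subseteq> {1..n}" and Jc: "\<forall>j\<in>J. j < n \<longrightarrow> Suc j \<in> J"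
    and ne: "strip_defects n lam J nu \<noteq> {}"
  defines "j0 \<equiv> Min (strip_defects n lam J nu)"
  shows "j0 \<in> J" "Suc j0 \<in> J" "1 \<le> j0" "j0 < n" "nu j0 < int (lam (Suc j0))" "lam (Suc j0) \<le> lam j0"
    "\<And>j. j \<in> strip_defects n lam J nu \<Longrightarrow> j0 \<le> j"
proof -
  have fin: "finite (strip_defects n lam J nu)"
    using J by (intro finite_subset[OF _ finite_atLeastAtMost[of 1 n]]) (auto simp: strip_defects_def)
  have "j0 \<in> strip_defects n lam J nu" unfolding j0_def using Min_in[OF fin ne] .
  thus j0: "j0 \<in> J" "j0 < n" "nu j0 < int (lam (Suc j0))" unfolding strip_defects_def by auto
  show "Suc j0 \<in> J" using Jc j0 by blast
  show "1 \<le> j0" using j0 J by auto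
  thus "lam (Suc j0) \<le> lam j0" using P j0 unfolding is_partition_def by auto
  show "\<And>j. j \<in> strip_defects n lam J nu \<Longrightarrow> j0 \<le> j" unfolding j0_def using Min_le[OF fin] by blast
qed

lemma defect_swap_props:
  assumes P: "is_partition n lam" and J: "J \<subseteq> {1..n}" and Jc: "\<forall>j\<in>J. j < n \<longrightarrow> Suc j \<in> J"
    and nu: "nu \<in> reduced_tuples n J (\<lambda>j. int (lam j))" and ne: "strip_defects n lam J nu \<noteq> {}"
  defines "nu' \<equiv> defect_swap n lam J nu"
  shows "nu' \<in> reduced_tuples n J (\<lambda>j. int (lam j))" "strip_defects n lam J nu' \<noteq> {}"
    "Min (strip_defects n lam J nu') = Min (strip_defects n lam J nu)"
    "defect_swap n lam J nu' = nu"
    "(\<Sum>j\<in>J. nat (int (lam j) - nu' j)) = (\<Sum>j\<in>J. nat (int (lam j) - nu j))"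
proof -
  define j0 where "j0 = Min (strip_defects n lam J nu)"
  note j0 = first_strip_defect[OF P J Jc ne, folded j0_def]
  have finJ: "finite J" using J finite_subset by blast
  have nuJ: "\<And>j. j \<in> J \<Longrightarrow> int j - int n \<le> nu j \<and> nu j \<le> int (lam j)"
    and nuN: "\<And>j. j \<notin> J \<Longrightarrow> nu j = int (lam j)" using nu unfolding reduced_tuples_def by auto
  have nu': "nu' = nu(j0 := nu (Suc j0) - 1, Suc j0 := nu j0 + 1)"
    unfolding nu'_def defect_swap_def j0_def[symmetric] by simp
  have nu'0: "nu' j0 = nu (Suc j0) - 1" "nu' (Suc j0) = nu j0 + 1" unfolding nu' by auto
  have nu'o: "\<And>j. j \<noteq> j0 \<Longrightarrow> j \<noteq> Suc j0 \<Longrightarrow> nu' j = nu j" unfolding nu' by auto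
  show nu'M: "nu' \<in> reduced_tuples n J (\<lambda>j. int (lam j))"
    unfolding reduced_tuples_def
  proof (intro CollectI allI conjI impI)
    fix j assume jJ: "j \<in> J"
    show "int j - int n \<le> nu' j"
      using nuJ[OF j0(1)] nuJ[OF j0(2)] nu'0 nu'o nuJ[OF jJ] by (cases "j = j0 \<or> j = Suc j0") auto
    show "nu' j \<le> int (lam j)"
      using nuJ[OF j0(1)] nuJ[OF j0(2)] nu'0 j0(5,6) nu'o nuJ[OF jJ] by (cases "j = j0 \<or> j = Suc j0") auto
  next
    fix j assume "j \<notin> J"
    thus "nu' j = int (lam j)" using nu'o nuN j0(1,2) by metis
  qed
  have j0B': "j0 \<in> strip_defects n lam J nu'" using j0 nu'0 nuJ[OF j0(2)] unfolding strip_defects_def by auto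
  thus "strip_defects n lam J nu' \<noteq> {}" by blast
  have low': "j0 \<le> j" if jB: "j \<in> strip_defects n lam J nu'" for j
  proof (rule ccontr)
    assume "\<not> j0 \<le> j"
    hence "j \<in> strip_defects n lam J nu" using jB nu'o unfolding strip_defects_def by auto
    thus False using j0(7) \<open>\<not> j0 \<le> j\<close> by fastforce
  qed
  have finB': "finite (strip_defects n lam J nu')" using finJ unfolding strip_defects_def by auto
  show min': "Min (strip_defects n lam J nu') = Min (strip_defects n lam J nu)"
    unfolding j0_def[symmetric] by (rule Min_eqI[OF finB' low' j0B'])
  show "defect_swap n lam J nu' = nu"
    unfolding defect_swap_def min' j0_def[symmetric] Let_def nu'0 by (auto simp: nu' fun_eq_iff)
  show "(\<Sum>j\<in>J. nat (int (lam j) - nu' j)) = (\<Sum>j\<in>J. nat (int (lam j) - nu j))"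
  proof (rule sum_cong_two_points[OF finJ j0(1,2)])
    show "j0 \<noteq> Suc j0" by simp
    show "\<forall>j\<in>J - {j0, Suc j0}. nat (int (lam j) - nu' j) = nat (int (lam j) - nu j)" using nu'o by auto
    have "0 \<le> int (lam j0) - nu' j0" "0 \<le> int (lam (Suc j0)) - nu' (Suc j0)"
      using nu'M j0(1,2) unfolding reduced_tuples_def by auto
    moreover have "0 \<le> int (lam j0) - nu j0" "0 \<le> int (lam (Suc j0)) - nu (Suc j0)"
      using nuJ j0(1,2) by auto
    ultimately show "nat (int (lam j0) - nu' j0) + nat (int (lam (Suc j0)) - nu' (Suc j0)) =
      nat (int (lam j0) - nu j0) + nat (int (lam (Suc j0)) - nu (Suc j0))"
      using nu'0 by (simp add: nat_add_distrib[symmetric])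
  qed
qed

lemma jt_mat_defect_swap:
  assumes P: "is_partition n lam" and J: "J \<subseteq> {1..n}" and Jc: "\<forall>j\<in>J. j < n \<longrightarrow> Suc j \<in> J"
    and ne: "strip_defects n lam J nu \<noteq> {}" and cJ: "\<forall>j\<in>J. c j = N"
  defines "j0 \<equiv> Min (strip_defects n lam J nu)"
  shows "jt_mat n (\<lambda>_. 1) (defect_swap n lam J nu) c x = swapcols (j0 - 1) j0 (jt_mat n (\<lambda>_. 1) nu c x)"
proof (rule eq_matI)
  note j0 = first_strip_defect[OF P J Jc ne, folded j0_def]
  let ?M = "jt_mat n (\<lambda>_. 1) nu c x"
  let ?nu' = "defect_swap n lam J nu"
  have nu': "?nu' = nu(j0 := nu (Suc j0) - 1, Suc j0 := nu j0 + 1)"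
    unfolding defect_swap_def j0_def[symmetric] by simp
  have cc: "c j0 = c (Suc j0)" using cJ j0(1,2) by simp
  have s1: "Suc (j0 - 1) = j0" using j0(3) by simp
  fix i j assume "i < dim_row (swapcols (j0 - 1) j0 ?M)" "j < dim_col (swapcols (j0 - 1) j0 ?M)"
  hence ij: "i < n" "j < n" by (auto simp: mat_swapcols_def)
  consider "j = j0 - 1" | "j = j0" | "j \<noteq> j0 - 1" "j \<noteq> j0" by blast
  thus "jt_mat n (\<lambda>_. 1) ?nu' c x $$ (i, j) = swapcols (j0 - 1) j0 ?M $$ (i, j)"
  proof cases
    case 1
    have "swapcols (j0 - 1) j0 ?M $$ (i, j) = ?M $$ (i, j0)" using ij 1 by (simp add: mat_swapcols_def)
    thus ?thesis using ij j0(4) 1 s1 cc by (simp add: jt_mat_index nu')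
  next
    case 2
    have "swapcols (j0 - 1) j0 ?M $$ (i, j) = ?M $$ (i, j0 - 1)" using ij 2 j0(3) by (simp add: mat_swapcols_def)
    thus ?thesis using ij j0(4) 2 s1 cc by (simp add: jt_mat_index nu')
  next
    case 3
    hence "Suc j \<noteq> j0" "Suc j \<noteq> Suc j0" using j0(3) by auto
    thus ?thesis using ij 3 by (simp add: mat_swapcols_def jt_mat_index nu')
  qed
qed (auto simp: mat_swapcols_def)

lemma det_jt_mat_defect_swap:
  assumes P: "is_partition n lam" and J: "J \<subseteq> {1..n}" and Jc: "\<forall>j\<in>J. j < n \<longrightarrow> Suc j \<in> J"
    and ne: "strip_defects n lam J nu \<noteq> {}" and cJ: "\<forall>j\<in>J. c j = N"
  shows "det (jt_mat n (\<lambda>_. 1) (defect_swap n lam J nu) c x) = - det (jt_mat n (\<lambda>_. 1) nu c x)"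
proof -
  define j0 where "j0 = Min (strip_defects n lam J nu)"
  note j0 = first_strip_defect[OF P J Jc ne, folded j0_def]
  show ?thesis
    unfolding jt_mat_defect_swap[OF P J Jc ne cJ, folded j0_def] using j0
    by (intro det_swapcols[where n=n]) auto
qed

text \<open>A fixed point of the involution yields two equal columns; in characteristic 2 this
  does not follow from the sign change alone.\<close>
lemma det_jt_mat_defect_swap_fixed:
  assumes P: "is_partition n lam" and J: "J \<subseteq> {1..n}" and Jc: "\<forall>j\<in>J. j < n \<longrightarrow> Suc j \<in> J"
    and ne: "strip_defects n lam J nu \<noteq> {}" and cJ: "\<forall>j\<in>J. c j = N"
    and eq: "defect_swap n lam J nu = nu"
  shows "det (jt_mat n (\<lambda>_. 1) nu c x) = 0"
proof -
  define j0 where "j0 = Min (strip_defects n lam J nu)"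
  note j0 = first_strip_defect[OF P J Jc ne, folded j0_def]
  let ?A = "jt_mat n (\<lambda>_. 1) nu c x"
  have A: "?A = swapcols (j0 - 1) j0 ?A"
    using jt_mat_defect_swap[OF P J Jc ne cJ, folded j0_def] eq by simp
  have "col ?A (j0 - 1) = col ?A j0"
  proof (rule eq_vecI)
    fix i assume "i < dim_vec (col ?A j0)"
    hence "i < n" by simp
    moreover have "j0 - 1 \<noteq> j0" using j0(3) by simp
    ultimately have "?A $$ (i, j0) = ?A $$ (i, j0 - 1)"
      using j0(4) arg_cong[OF A, of "\<lambda>M. M $$ (i, j0)"] by (simp add: mat_swapcols_def)
    thus "col ?A (j0 - 1) $ i = col ?A j0 $ i" using \<open>i < n\<close> j0(4) by simp
  qed simp
  thus ?thesis by (intro det_identical_columns[of _ n "j0 - 1" j0]) (use j0 in auto)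
qed

lemma det_jt_mat_sum_strips:
  fixes x :: "nat \<Rightarrow> 'a::comm_ring_1" and X :: 'a
  assumes P: "is_partition n lam" and J: "J \<subseteq> {1..n}" and Jc: "\<forall>j\<in>J. j < n \<longrightarrow> Suc j \<in> J"
    and cJ: "\<forall>j\<in>J. c j = N"
  defines "W \<equiv> \<lambda>nu. (\<Prod>j\<in>J. X ^ nat (int (lam j) - nu j))"
  shows "(\<Sum>nu\<in>reduced_tuples n J (\<lambda>j. int (lam j)). W nu * det (jt_mat n (\<lambda>_. 1) nu c x)) =
    (\<Sum>nu\<in>{nu\<in>reduced_tuples n J (\<lambda>j. int (lam j)). strip_defects n lam J nu = {}}. W nu * det (jt_mat n (\<lambda>_. 1) nu c x))"
proof -
  let ?M = "reduced_tuples n J (\<lambda>j. int (lam j))"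
  let ?F = "\<lambda>nu. W nu * det (jt_mat n (\<lambda>_. 1) nu c x)"
  let ?s = "defect_swap n lam J"
  let ?B = "{nu\<in>?M. strip_defects n lam J nu \<noteq> {}}"
  have finM: "finite ?M" using J finite_subset by (blast intro: finite_reduced_tuples)
  have W: "W nu = X ^ (\<Sum>j\<in>J. nat (int (lam j) - nu j))" for nu
    unfolding W_def by (simp add: power_sum)
  have swap: "?s nu \<in> ?B \<and> ?s (?s nu) = nu \<and> ?F (?s nu) = - ?F nu" if nu: "nu \<in> ?B" for nu
  proof -
    have nuM: "nu \<in> ?M" and ne: "strip_defects n lam J nu \<noteq> {}" using nu by auto
    note S = defect_swap_props[OF P J Jc nuM ne]
    show ?thesis using S det_jt_mat_defect_swap[where x=x, OF P J Jc ne cJ] by (simp add: W)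
  qed
  have "sum ?F ?B = sum ?F ({nu\<in>?B. ?s nu \<noteq> nu} \<union> {nu\<in>?B. ?s nu = nu})"
    by (rule arg_cong[where f="sum ?F"]) blast
  also have "\<dots> = sum ?F {nu\<in>?B. ?s nu \<noteq> nu} + sum ?F {nu\<in>?B. ?s nu = nu}"
    by (rule sum.union_disjoint) (use finM in auto)
  also have "sum ?F {nu\<in>?B. ?s nu \<noteq> nu} = 0"
    by (rule sum_involution_eq_0[where h = ?s]) (use swap in auto)
  also have "sum ?F {nu\<in>?B. ?s nu = nu} = 0"
    using det_jt_mat_defect_swap_fixed[where x=x, OF P J Jc _ cJ] by simp
  finally have "sum ?F ?B = 0" by simp
  moreover have "sum ?F ?M = sum ?F ({nu\<in>?M. strip_defects n lam J nu = {}} \<union> ?B)"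
    by (rule arg_cong[where f="sum ?F"]) blast
  moreover have "\<dots> = sum ?F {nu\<in>?M. strip_defects n lam J nu = {}} + sum ?F ?B"
    by (rule sum.union_disjoint) (use finM in auto)
  ultimately show ?thesis by simp
qed

section \<open>Removing the largest entries of a tableau\<close>

definition row_below :: "(nat \<Rightarrow> nat) \<Rightarrow> nat \<Rightarrow> (nat \<Rightarrow> nat \<Rightarrow> nat) \<Rightarrow> nat \<Rightarrow> nat" where
  "row_below lam N T j = Max (insert 0 {c \<in> {1..lam j}. T j c < N})"

definition inner_shape :: "nat \<Rightarrow> (nat \<Rightarrow> nat) \<Rightarrow> nat \<Rightarrow> (nat \<Rightarrow> nat \<Rightarrow> nat) \<Rightarrow> nat \<Rightarrow> int" where
  "inner_shape n lam N T j = (if 1 \<le> j \<and> j \<le> n then int (row_below lam N T j) else int (lam j))"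

definition restrict_below :: "nat \<Rightarrow> (nat \<Rightarrow> nat \<Rightarrow> nat) \<Rightarrow> nat \<Rightarrow> nat \<Rightarrow> nat" where
  "restrict_below N T i c = (if T i c < N then T i c else 0)"

definition fill_outer :: "nat \<Rightarrow> (nat \<Rightarrow> nat) \<Rightarrow> nat \<Rightarrow> (nat \<Rightarrow> int) \<Rightarrow> (nat \<Rightarrow> nat \<Rightarrow> nat) \<Rightarrow> nat \<Rightarrow> nat \<Rightarrow> nat" where
  "fill_outer n lam N nu T i c = (if (i, c) \<in> shape n lam \<and> (i, c) \<notin> shape n (\<lambda>j. nat (nu j)) then N else T i c)"

lemma row_below_props:
  assumes T: "T \<in> flagged_tableaux n lam f" and j: "1 \<le> j" "j \<le> n"
  shows "row_below lam N T j \<le> lam j" "\<And>c. 1 \<le> c \<Longrightarrow> c \<le> lam j \<Longrightarrow> T j c < N \<longleftrightarrow> c \<le> row_below lam N T j"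
proof -
  let ?S = "insert 0 {c \<in> {1..lam j}. T j c < N}"
  have fin: "finite ?S" by simp
  have mem: "row_below lam N T j \<in> ?S" unfolding row_below_def by (rule Max_in[OF fin]) simp
  show "row_below lam N T j \<le> lam j" using mem by auto
  fix c assume c: "1 \<le> c" "c \<le> lam j"
  show "T j c < N \<longleftrightarrow> c \<le> row_below lam N T j"
  proof
    assume "T j c < N"
    hence "c \<in> ?S" using c by auto
    thus "c \<le> row_below lam N T j" unfolding row_below_def using Max_ge[OF fin] by blast
  next
    assume cr: "c \<le> row_below lam N T j"
    hence "row_below lam N T j \<noteq> 0" using c by auto
    hence "row_below lam N T j \<in> {c \<in> {1..lam j}. T j c < N}" using mem by auto
    hence r: "T j (row_below lam N T j) < N" "row_below lam N T j \<le> lam j" by auto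
    have "T j c \<le> T j (row_below lam N T j)" by (rule flagged_tableau_row_mono[OF T j c(1) cr r(2)])
    thus "T j c < N" using r by simp
  qed
qed

definition top_rows :: "nat \<Rightarrow> (nat \<Rightarrow> nat) \<Rightarrow> nat \<Rightarrow> nat set" where
  "top_rows n b N = {j. 1 \<le> j \<and> j \<le> n \<and> b j = N}"

lemma finite_top_rows: "finite (top_rows n b N)"
  unfolding top_rows_def by (rule finite_subset[of _ "{..n}"]) auto

text \<open>For a weakly increasing flag \<open>b \<le> N + 1\<close> the rows \<open>J\<close> with flag \<open>N + 1\<close> form a
  final segment, and the entries \<open>N + 1\<close> of a tableau occupy a horizontal strip \<open>\<lambda>/\<nu>\<close>
  in these rows.\<close>
context
  fixes n :: nat and lam b :: "nat \<Rightarrow> nat" and N :: nat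
  assumes P: "is_partition n lam" and bm: "\<And>i. 1 \<le> i \<Longrightarrow> i < n \<Longrightarrow> b i \<le> b (Suc i)"
    and bN: "\<And>i. 1 \<le> i \<Longrightarrow> i \<le> n \<Longrightarrow> b i \<le> Suc N" and Nn: "Suc N \<le> n"
begin

abbreviation "J \<equiv> top_rows n b (Suc N)"
abbreviation "b' \<equiv> (\<lambda>j. if j \<in> J then N else b j)"
abbreviation "strips \<equiv> {nu \<in> reduced_tuples n J (\<lambda>j. int (lam j)). strip_defects n lam J nu = {}}"

lemma top_rows_iff: "j \<in> J \<longleftrightarrow> 1 \<le> j \<and> j \<le> n \<and> b j = Suc N" unfolding top_rows_def by simp

lemma top_rows_Suc: "j \<in> J \<Longrightarrow> j < n \<Longrightarrow> Suc j \<in> J"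
  using bm[of j] bN[of "Suc j"] unfolding top_rows_iff by auto

lemma flag_le_not_top: "1 \<le> j \<Longrightarrow> j \<le> n \<Longrightarrow> j \<notin> J \<Longrightarrow> b j \<le> N"
  using bN[of j] unfolding top_rows_iff by auto

lemma lowered_le: "1 \<le> j \<Longrightarrow> j \<le> n \<Longrightarrow> b' j \<le> N" using flag_le_not_top by auto

lemma lowered_mono: "1 \<le> i \<Longrightarrow> i < n \<Longrightarrow> b' i \<le> b' (Suc i)"
  using bm[of i] top_rows_Suc[of i] flag_le_not_top[of i] by (auto simp: top_rows_iff)

lemma lam_Suc_le: "1 \<le> i \<Longrightarrow> i < n \<Longrightarrow> lam (Suc i) \<le> lam i"
  using P unfolding is_partition_def by auto

lemma strips_props:
  assumes nu: "nu \<in> strips"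
  shows "\<And>j. j \<notin> J \<Longrightarrow> nu j = int (lam j)"
    "\<And>j. 1 \<le> j \<Longrightarrow> j \<le> n \<Longrightarrow> 0 \<le> nu j \<and> nu j \<le> int (lam j)"
    "\<And>j. j \<in> J \<Longrightarrow> j < n \<Longrightarrow> int (lam (Suc j)) \<le> nu j"
proof -
  have M: "\<And>j. j \<in> J \<Longrightarrow> int j - int n \<le> nu j \<and> nu j \<le> int (lam j)"
    "\<And>j. j \<notin> J \<Longrightarrow> nu j = int (lam j)" using nu unfolding reduced_tuples_def by auto
  show B: "\<And>j. j \<in> J \<Longrightarrow> j < n \<Longrightarrow> int (lam (Suc j)) \<le> nu j"
    using nu unfolding strip_defects_def by auto
  show "\<And>j. j \<notin> J \<Longrightarrow> nu j = int (lam j)" by (rule M(2))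
  fix j assume j: "1 \<le> j" "j \<le> n"
  show "0 \<le> nu j \<and> nu j \<le> int (lam j)"
  proof (cases "j \<in> J")
    case True
    show ?thesis
    proof (cases "j < n")
      case True2: True
      show ?thesis using B[OF True True2] M(1)[OF True] by simp
    next
      case False
      hence "j = n" using j by simp
      thus ?thesis using M(1)[OF True] by simp
    qed
  next
    case False thus ?thesis using M(2) by simp
  qed
qed

lemma strips_partition:
  assumes nu: "nu \<in> strips"
  shows "is_partition n (\<lambda>j. nat (nu j))"
  unfolding is_partition_def
proof (intro allI impI)
  fix i assume i: "1 \<le> i \<and> i < n"
  note G = strips_props[OF nu]
  have "nu (Suc i) \<le> nu i"
  proof (cases "i \<in> J")
    case True
    show ?thesis using G(3)[OF True] G(2)[of "Suc i"] i by simp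
  next
    case False
    have "nu (Suc i) \<le> int (lam (Suc i))" using G(2)[of "Suc i"] i by simp
    also have "\<dots> \<le> int (lam i)" using lam_Suc_le[of i] i by simp
    finally show ?thesis using G(1)[OF False] by simp
  qed
  thus "nat (nu (Suc i)) \<le> nat (nu i)" by simp
qed

lemma strips_shape_sub:
  assumes nu: "nu \<in> strips" and ic: "(i, c) \<in> shape n (\<lambda>j. nat (nu j))"
  shows "(i, c) \<in> shape n lam"
  using ic strips_props(2)[OF nu, of i] by (auto simp: mem_shape_iff)

lemma finite_strips: "finite strips"
proof -
  have "finite J" unfolding top_rows_def by (rule finite_subset[of _ "{..n}"]) auto
  thus ?thesis using finite_reduced_tuples by auto
qed

lemma row_below_not_top:
  assumes T: "T \<in> flagged_tableaux n lam b" and j: "1 \<le> j" "j \<le> n" "j \<notin> J"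
  shows "row_below lam (Suc N) T j = lam j"
proof (cases "lam j = 0")
  case True thus ?thesis using row_below_props(1)[where N="Suc N", OF T j(1,2)] by simp
next
  case False
  have "T j (lam j) \<le> b j" using T j False unfolding mem_flagged_tableaux_iff mem_shape_iff by auto
  hence "T j (lam j) < (Suc N)" using flag_le_not_top[OF j] by simp
  hence "lam j \<le> row_below lam (Suc N) T j" using row_below_props(2)[where N="Suc N", OF T j(1,2), of "lam j"] False by simp
  thus ?thesis using row_below_props(1)[where N="Suc N", OF T j(1,2)] by simp
qed

lemma inner_shape_strip:
  assumes T: "T \<in> flagged_tableaux n lam b"
  shows "inner_shape n lam (Suc N) T \<in> strips"
proof -
  have m: "inner_shape n lam (Suc N) T \<in> reduced_tuples n J (\<lambda>j. int (lam j))"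
    unfolding reduced_tuples_def
  proof (intro CollectI allI conjI impI)
    fix j assume jJ: "j \<in> J"
    hence j: "1 \<le> j" "j \<le> n" unfolding top_rows_iff by auto
    show "int j - int n \<le> inner_shape n lam (Suc N) T j" using j unfolding inner_shape_def by simp
    show "inner_shape n lam (Suc N) T j \<le> int (lam j)" using j row_below_props(1)[where N="Suc N", OF T j] unfolding inner_shape_def by simp
  next
    fix j assume jJ: "j \<notin> J"
    show "inner_shape n lam (Suc N) T j = int (lam j)"
      using row_below_not_top[OF T _ _ jJ] unfolding inner_shape_def by auto
  qed
  have "strip_defects n lam J (inner_shape n lam (Suc N) T) = {}"
  proof -
    have "int (lam (Suc j)) \<le> inner_shape n lam (Suc N) T j" if jJ: "j \<in> J" and jn: "j < n" for j
    proof -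
      have j: "1 \<le> j" "j \<le> n" using jJ unfolding top_rows_iff by auto
      show ?thesis
      proof (cases "lam (Suc j) = 0")
        case True thus ?thesis using j unfolding inner_shape_def by simp
      next
        case False
        let ?c = "lam (Suc j)"
        have le: "?c \<le> lam j" using lam_Suc_le[of j] j jn by simp
        have "(j, ?c) \<in> shape n lam" "(Suc j, ?c) \<in> shape n lam" using j jn le False by (auto simp: mem_shape_iff)
        hence "T j ?c < T (Suc j) ?c" "T (Suc j) ?c \<le> b (Suc j)" using T unfolding mem_flagged_tableaux_iff by auto
        moreover have "b (Suc j) \<le> (Suc N)" using bN[of "Suc j"] j jn by simp
        ultimately have "T j ?c < (Suc N)" by simp
        hence "?c \<le> row_below lam (Suc N) T j" using row_below_props(2)[where N="Suc N", OF T j, of ?c] False le by simp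
        thus ?thesis using j unfolding inner_shape_def by simp
      qed
    qed
    thus ?thesis unfolding strip_defects_def by fastforce
  qed
  thus ?thesis using m by simp
qed

lemma inner_shape_mem_iff:
  assumes T: "T \<in> flagged_tableaux n lam b"
  shows "(i, c) \<in> shape n (\<lambda>j. nat (inner_shape n lam (Suc N) T j)) \<longleftrightarrow> (i, c) \<in> shape n lam \<and> T i c < (Suc N)"
proof (cases "1 \<le> i \<and> i \<le> n")
  case True
  hence i: "1 \<le> i" "i \<le> n" by auto
  have nu: "nat (inner_shape n lam (Suc N) T i) = row_below lam (Suc N) T i" using i unfolding inner_shape_def by simp
  show ?thesis unfolding mem_shape_iff nu using row_below_props[where N="Suc N", OF T i] i by auto
next
  case False thus ?thesis unfolding mem_shape_iff by auto
qed

lemma restrict_below_flagged: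
  assumes T: "T \<in> flagged_tableaux n lam b"
  shows "restrict_below (Suc N) T \<in> flagged_tableaux n (\<lambda>j. nat (inner_shape n lam (Suc N) T j)) b'"
proof -
  note S = inner_shape_mem_iff[OF T]
  have T0: "\<And>i c. (i, c) \<notin> shape n lam \<Longrightarrow> T i c = 0" using T unfolding mem_flagged_tableaux_iff by auto
  show ?thesis unfolding mem_flagged_tableaux_iff
  proof (intro conjI allI impI)
    fix i j assume "(i, j) \<notin> shape n (\<lambda>j. nat (inner_shape n lam (Suc N) T j))"
    hence "(i, j) \<notin> shape n lam \<or> \<not> T i j < (Suc N)" using S by auto
    thus "restrict_below (Suc N) T i j = 0" unfolding restrict_below_def using T0 by auto
  next
    fix i j assume ij: "(i, j) \<in> shape n (\<lambda>j. nat (inner_shape n lam (Suc N) T j))"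
    hence ij': "(i, j) \<in> shape n lam" "T i j < (Suc N)" using S by auto
    have i: "1 \<le> i" "i \<le> n" using ij' by (auto simp: mem_shape_iff)
    have "T i j \<in> {1..n}" "T i j \<le> b i" using T ij' unfolding mem_flagged_tableaux_iff by auto
    moreover have "T i j \<le> b' i" using \<open>T i j \<le> b i\<close> ij'(2) by auto
    ultimately show "restrict_below (Suc N) T i j \<in> {1..n}" unfolding restrict_below_def using ij' by auto
  next
    fix i j assume ij: "(i, j) \<in> shape n (\<lambda>j. nat (inner_shape n lam (Suc N) T j))"
    hence ij': "(i, j) \<in> shape n lam" "T i j < (Suc N)" using S by auto
    have "T i j \<le> b i" using T ij' unfolding mem_flagged_tableaux_iff by auto
    hence "T i j \<le> b' i" using ij'(2) by auto
    thus "restrict_below (Suc N) T i j \<le> b' i" unfolding restrict_below_def using ij' by auto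
  next
    fix i j assume "(i, j) \<in> shape n (\<lambda>j. nat (inner_shape n lam (Suc N) T j)) \<and> (i, Suc j) \<in> shape n (\<lambda>j. nat (inner_shape n lam (Suc N) T j))"
    hence a: "(i, j) \<in> shape n lam" "T i j < (Suc N)" "(i, Suc j) \<in> shape n lam" "T i (Suc j) < (Suc N)" using S by auto
    thus "restrict_below (Suc N) T i j \<le> restrict_below (Suc N) T i (Suc j)" using T unfolding mem_flagged_tableaux_iff restrict_below_def by auto
  next
    fix i j assume "(i, j) \<in> shape n (\<lambda>j. nat (inner_shape n lam (Suc N) T j)) \<and> (Suc i, j) \<in> shape n (\<lambda>j. nat (inner_shape n lam (Suc N) T j))"
    hence a: "(i, j) \<in> shape n lam" "T i j < (Suc N)" "(Suc i, j) \<in> shape n lam" "T (Suc i) j < (Suc N)" using S by auto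
    thus "restrict_below (Suc N) T i j < restrict_below (Suc N) T (Suc i) j" using T unfolding mem_flagged_tableaux_iff restrict_below_def by auto
  qed
qed

lemma fill_restrict_below:
  assumes T: "T \<in> flagged_tableaux n lam b"
  shows "fill_outer n lam (Suc N) (inner_shape n lam (Suc N) T) (restrict_below (Suc N) T) = T"
proof (intro ext)
  fix i c
  note S = inner_shape_mem_iff[OF T, of i c]
  show "fill_outer n lam (Suc N) (inner_shape n lam (Suc N) T) (restrict_below (Suc N) T) i c = T i c"
  proof (cases "(i, c) \<in> shape n lam")
    case True
    have i: "1 \<le> i" "i \<le> n" using True by (auto simp: mem_shape_iff)
    have le: "T i c \<le> (Suc N)" using T True bN[OF i] unfolding mem_flagged_tableaux_iff by fastforce
    show ?thesis using S True le unfolding fill_outer_def restrict_below_def by auto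
  next
    case False
    hence "T i c = 0" using T unfolding mem_flagged_tableaux_iff by auto
    thus ?thesis using False unfolding fill_outer_def restrict_below_def by auto
  qed
qed

lemma strip_tableau_less:
  assumes nu: "nu \<in> strips" and T': "T' \<in> flagged_tableaux n (\<lambda>j. nat (nu j)) b'"
  shows "T' i c < (Suc N)"
proof (cases "(i, c) \<in> shape n (\<lambda>j. nat (nu j))")
  case True
  have i: "1 \<le> i" "i \<le> n" using True by (auto simp: mem_shape_iff)
  have "T' i c \<le> b' i" using T' True unfolding mem_flagged_tableaux_iff by auto
  thus ?thesis using lowered_le[OF i] by simp
next
  case False thus ?thesis using T' unfolding mem_flagged_tableaux_iff by auto
qed

lemma outer_box_top:
  assumes nu: "nu \<in> strips" and "(i, c) \<in> shape n lam" "(i, c) \<notin> shape n (\<lambda>j. nat (nu j))"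
  shows "i \<in> J" "nat (nu i) < c"
proof -
  have i: "1 \<le> i" "i \<le> n" "1 \<le> c" "c \<le> lam i" using assms(2) by (auto simp: mem_shape_iff)
  hence "\<not> c \<le> nat (nu i)" using assms(3) by (auto simp: mem_shape_iff)
  thus "nat (nu i) < c" by simp
  show "i \<in> J"
  proof (rule ccontr)
    assume "i \<notin> J"
    hence "nu i = int (lam i)" using strips_props(1)[OF nu] by simp
    thus False using \<open>nat (nu i) < c\<close> i by simp
  qed
qed

lemma fill_outer_entry:
  assumes nu: "nu \<in> strips" and T': "T' \<in> flagged_tableaux n (\<lambda>j. nat (nu j)) b'"
    and ij: "(i, j) \<in> shape n lam"
  shows "fill_outer n lam (Suc N) nu T' i j \<in> {1..n}" "fill_outer n lam (Suc N) nu T' i j \<le> b i"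
proof -
  have i: "1 \<le> i" "i \<le> n" using ij by (auto simp: mem_shape_iff)
  have "fill_outer n lam (Suc N) nu T' i j \<in> {1..n} \<and> fill_outer n lam (Suc N) nu T' i j \<le> b i"
  proof (cases "(i, j) \<in> shape n (\<lambda>j. nat (nu j))")
    case True
    have "T' i j \<in> {1..n}" "T' i j \<le> b' i" using T' True unfolding mem_flagged_tableaux_iff by auto
    moreover have "b' i \<le> b i" using bN[OF i] by (auto simp: top_rows_iff)
    ultimately show ?thesis using True unfolding fill_outer_def by auto
  next
    case False
    have "b i = Suc N" using outer_box_top[OF nu ij False] unfolding top_rows_iff by simp
    thus ?thesis using False ij Nn unfolding fill_outer_def by auto
  qed
  thus "fill_outer n lam (Suc N) nu T' i j \<in> {1..n}" "fill_outer n lam (Suc N) nu T' i j \<le> b i" by auto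
qed

lemma fill_outer_row_mono:
  assumes nu: "nu \<in> strips" and T': "T' \<in> flagged_tableaux n (\<lambda>j. nat (nu j)) b'"
    and a: "(i, j) \<in> shape n lam" "(i, Suc j) \<in> shape n lam"
  shows "fill_outer n lam (Suc N) nu T' i j \<le> fill_outer n lam (Suc N) nu T' i (Suc j)"
proof (cases "(i, j) \<in> shape n (\<lambda>j. nat (nu j))")
  case True
  thus ?thesis using a T' strip_tableau_less[OF nu T', of i j]
    unfolding fill_outer_def mem_flagged_tableaux_iff by auto
next
  case False
  have "nat (nu i) < j" using outer_box_top[OF nu a(1) False] by blast
  hence "(i, Suc j) \<notin> shape n (\<lambda>j. nat (nu j))" by (auto simp: mem_shape_iff)
  thus ?thesis using False a unfolding fill_outer_def by auto
qed

lemma fill_outer_col_strict: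
  assumes nu: "nu \<in> strips" and T': "T' \<in> flagged_tableaux n (\<lambda>j. nat (nu j)) b'"
    and a: "(i, j) \<in> shape n lam" "(Suc i, j) \<in> shape n lam"
  shows "fill_outer n lam (Suc N) nu T' i j < fill_outer n lam (Suc N) nu T' (Suc i) j"
proof -
  have i: "1 \<le> i" "Suc i \<le> n" "j \<le> lam (Suc i)" using a by (auto simp: mem_shape_iff)
  have inner: "(i, j) \<in> shape n (\<lambda>j. nat (nu j))"
  proof (rule ccontr)
    assume F: "(i, j) \<notin> shape n (\<lambda>j. nat (nu j))"
    have "i \<in> J" "nat (nu i) < j" using outer_box_top[OF nu a(1) F] by auto
    moreover have "int (lam (Suc i)) \<le> nu i" using strips_props(3)[OF nu \<open>i \<in> J\<close>] i by simp
    ultimately show False using i by simp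
  qed
  thus ?thesis using a T' strip_tableau_less[OF nu T', of i j]
    unfolding fill_outer_def mem_flagged_tableaux_iff by auto
qed

lemma fill_outer_flagged:
  assumes nu: "nu \<in> strips" and T': "T' \<in> flagged_tableaux n (\<lambda>j. nat (nu j)) b'"
  shows "fill_outer n lam (Suc N) nu T' \<in> flagged_tableaux n lam b"
proof -
  have "fill_outer n lam (Suc N) nu T' i j = 0" if "(i, j) \<notin> shape n lam" for i j
    using that T' strips_shape_sub[OF nu] unfolding fill_outer_def mem_flagged_tableaux_iff by auto
  thus ?thesis unfolding mem_flagged_tableaux_iff
    using fill_outer_entry[OF nu T'] fill_outer_row_mono[OF nu T'] fill_outer_col_strict[OF nu T'] by blast
qed

lemma restrict_fill_outer:
  assumes nu: "nu \<in> strips" and T': "T' \<in> flagged_tableaux n (\<lambda>j. nat (nu j)) b'"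
  shows "restrict_below (Suc N) (fill_outer n lam (Suc N) nu T') = T'"
proof (intro ext)
  fix i c
  show "restrict_below (Suc N) (fill_outer n lam (Suc N) nu T') i c = T' i c"
  proof (cases "(i, c) \<in> shape n lam \<and> (i, c) \<notin> shape n (\<lambda>j. nat (nu j))")
    case True
    hence "T' i c = 0" using T' unfolding mem_flagged_tableaux_iff by auto
    thus ?thesis using True unfolding restrict_below_def fill_outer_def by auto
  next
    case False
    thus ?thesis using strip_tableau_less[OF nu T', of i c] unfolding restrict_below_def fill_outer_def by auto
  qed
qed

lemma inner_shape_fill_outer:
  assumes nu: "nu \<in> strips" and T': "T' \<in> flagged_tableaux n (\<lambda>j. nat (nu j)) b'"
  shows "inner_shape n lam (Suc N) (fill_outer n lam (Suc N) nu T') = nu"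
proof (intro ext)
  fix j
  show "inner_shape n lam (Suc N) (fill_outer n lam (Suc N) nu T') j = nu j"
  proof (cases "1 \<le> j \<and> j \<le> n")
    case True
    hence j: "1 \<le> j" "j \<le> n" by auto
    note G = strips_props(2)[OF nu j]
    have set: "{c \<in> {1..lam j}. fill_outer n lam (Suc N) nu T' j c < Suc N} = {1..nat (nu j)}"
    proof (intro Set.set_eqI iffI)
      fix c assume "c \<in> {c \<in> {1..lam j}. fill_outer n lam (Suc N) nu T' j c < Suc N}"
      hence c: "1 \<le> c" "c \<le> lam j" "fill_outer n lam (Suc N) nu T' j c < (Suc N)" by auto
      hence "(j, c) \<in> shape n (\<lambda>j. nat (nu j))" unfolding fill_outer_def using j by (auto simp: mem_shape_iff split: if_splits)
      thus "c \<in> {1..nat (nu j)}" by (auto simp: mem_shape_iff)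
    next
      fix c assume "c \<in> {1..nat (nu j)}"
      hence c: "1 \<le> c" "c \<le> nat (nu j)" by auto
      hence "(j, c) \<in> shape n (\<lambda>j. nat (nu j))" using j by (auto simp: mem_shape_iff)
      moreover have "c \<le> lam j" using c G by linarith
      ultimately show "c \<in> {c \<in> {1..lam j}. fill_outer n lam (Suc N) nu T' j c < Suc N}"
        using c strip_tableau_less[OF nu T', of j c] unfolding fill_outer_def by auto
    qed
    have "row_below lam (Suc N) (fill_outer n lam (Suc N) nu T') j = nat (nu j)"
      unfolding row_below_def set
    proof (rule Max_eqI)
      show "finite (insert 0 {1..nat (nu j)})" by simp
      show "nat (nu j) \<in> insert 0 {1..nat (nu j)}" by (cases "nat (nu j)") auto
    qed auto
    thus ?thesis using j G unfolding inner_shape_def by simp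
  next
    case False
    hence "j \<notin> J" unfolding top_rows_iff by auto
    thus ?thesis using strips_props(1)[OF nu] unfolding inner_shape_def if_not_P[OF False] by simp
  qed
qed

lemma shape_diff_inner_shape:
  assumes T: "T \<in> flagged_tableaux n lam b"
  shows "shape n lam - shape n (\<lambda>j. nat (inner_shape n lam (Suc N) T j)) =
    Sigma J (\<lambda>j. {row_below lam (Suc N) T j<..lam j})"
proof (intro Set.set_eqI iffI)
  let ?r = "\<lambda>j. row_below lam (Suc N) T j"
  note S = inner_shape_mem_iff[OF T]
  fix p assume p: "p \<in> shape n lam - shape n (\<lambda>j. nat (inner_shape n lam (Suc N) T j))"
  obtain i c where pic: "p = (i, c)" by (cases p)
  have a: "(i, c) \<in> shape n lam" "\<not> T i c < Suc N" using p S pic by auto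
  have i: "1 \<le> i" "i \<le> n" "1 \<le> c" "c \<le> lam i" using a by (auto simp: mem_shape_iff)
  have rc: "?r i < c" using row_below_props(2)[where N="Suc N", OF T i(1,2) i(3,4)] a by simp
  have "i \<in> J"
  proof (rule ccontr)
    assume "i \<notin> J"
    hence "?r i = lam i" using row_below_not_top[OF T i(1,2)] by simp
    thus False using rc i by simp
  qed
  thus "p \<in> Sigma J (\<lambda>j. {?r j<..lam j})" using pic rc i by auto
next
  let ?r = "\<lambda>j. row_below lam (Suc N) T j"
  note S = inner_shape_mem_iff[OF T]
  fix p assume p: "p \<in> Sigma J (\<lambda>j. {?r j<..lam j})"
  obtain i c where pic: "p = (i, c)" by (cases p)
  have a: "i \<in> J" "?r i < c" "c \<le> lam i" using p pic by auto
  have i: "1 \<le> i" "i \<le> n" using a unfolding top_rows_iff by auto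
  have "(i, c) \<in> shape n lam" using a i by (auto simp: mem_shape_iff)
  moreover have "\<not> T i c < Suc N" using row_below_props(2)[where N="Suc N", OF T i, of c] a by simp
  ultimately show "p \<in> shape n lam - shape n (\<lambda>j. nat (inner_shape n lam (Suc N) T j))" using S pic by auto
qed

lemma box_prod_inner_shape:
  fixes x :: "nat \<Rightarrow> 'a::comm_ring_1"
  assumes T: "T \<in> flagged_tableaux n lam b"
  shows "(\<Prod>p\<in>shape n lam. x (T (fst p) (snd p))) =
    (\<Prod>j\<in>J. x (Suc N) ^ nat (int (lam j) - inner_shape n lam (Suc N) T j)) *
    (\<Prod>p\<in>shape n (\<lambda>j. nat (inner_shape n lam (Suc N) T j)). x (restrict_below (Suc N) T (fst p) (snd p)))"
proof -
  let ?mS = "shape n (\<lambda>j. nat (inner_shape n lam (Suc N) T j))"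
  let ?D = "shape n lam - ?mS"
  let ?r = "\<lambda>j. row_below lam (Suc N) T j"
  note S = inner_shape_mem_iff[OF T]
  have sub: "?mS \<subseteq> shape n lam" using S by auto
  have "(\<Prod>p\<in>shape n lam. x (T (fst p) (snd p))) = (\<Prod>p\<in>?D. x (T (fst p) (snd p))) * (\<Prod>p\<in>?mS. x (T (fst p) (snd p)))"
    by (rule prod.subset_diff[OF sub finite_shape])
  also have "(\<Prod>p\<in>?mS. x (T (fst p) (snd p))) = (\<Prod>p\<in>?mS. x (restrict_below (Suc N) T (fst p) (snd p)))"
    by (rule prod.cong[OF refl]) (use S in \<open>auto simp: restrict_below_def\<close>)
  also have "(\<Prod>p\<in>?D. x (T (fst p) (snd p))) = (\<Prod>p\<in>?D. x (Suc N))"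
  proof (rule prod.cong[OF refl])
    fix p assume p: "p \<in> ?D"
    obtain i c where pic: "p = (i, c)" by (cases p)
    have a: "(i, c) \<in> shape n lam" "\<not> T i c < Suc N" using p S pic by auto
    have i: "1 \<le> i" "i \<le> n" using a by (auto simp: mem_shape_iff)
    have "T i c \<le> b i" using T a unfolding mem_flagged_tableaux_iff by auto
    hence "T i c = Suc N" using a bN[OF i] by simp
    thus "x (T (fst p) (snd p)) = x (Suc N)" using pic by simp
  qed
  also have "\<dots> = x (Suc N) ^ (\<Sum>j\<in>J. lam j - ?r j)"
    by (simp add: shape_diff_inner_shape[OF T] card_SigmaI finite_top_rows)
  also have "\<dots> = (\<Prod>j\<in>J. x (Suc N) ^ nat (int (lam j) - inner_shape n lam (Suc N) T j))"
    unfolding power_sum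
  proof (rule prod.cong[OF refl])
    fix j assume "j \<in> J"
    hence j: "1 \<le> j" "j \<le> n" unfolding top_rows_iff by auto
    have "nat (int (lam j) - inner_shape n lam (Suc N) T j) = lam j - ?r j"
      using j row_below_props(1)[where N="Suc N", OF T j] unfolding inner_shape_def by simp
    thus "x (Suc N) ^ (lam j - ?r j) = x (Suc N) ^ nat (int (lam j) - inner_shape n lam (Suc N) T j)" by simp
  qed
  finally show ?thesis .
qed

lemma flagged_schur_strip_decomp:
  fixes x :: "nat \<Rightarrow> 'a::comm_ring_1"
  shows "flagged_schur n lam b x = (\<Sum>nu\<in>strips. (\<Prod>j\<in>J. x (Suc N) ^ nat (int (lam j) - nu j)) *
      flagged_schur n (\<lambda>j. nat (nu j)) b' x)"
proof -
  let ?W = "\<lambda>nu. (\<Prod>j\<in>J. x (Suc N) ^ nat (int (lam j) - nu j))"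
  let ?g = "\<lambda>T. \<Prod>p\<in>shape n lam. x (T (fst p) (snd p))"
  let ?FT = "flagged_tableaux n lam b"
  have img: "inner_shape n lam (Suc N) ` ?FT \<subseteq> strips" using inner_shape_strip by auto
  have "flagged_schur n lam b x = sum ?g ?FT" by (rule flagged_schur_box_prod)
  also have "\<dots> = (\<Sum>nu\<in>strips. sum ?g {T. T \<in> ?FT \<and> inner_shape n lam (Suc N) T = nu})"
    by (rule sum.group[symmetric, OF finite_flagged_tableaux finite_strips img])
  also have "\<dots> = (\<Sum>nu\<in>strips. ?W nu * flagged_schur n (\<lambda>j. nat (nu j)) b' x)"
  proof (rule sum.cong[OF refl])
    fix nu assume nu: "nu \<in> strips"
    let ?h = "\<lambda>T'. ?W nu * (\<Prod>p\<in>shape n (\<lambda>j. nat (nu j)). x (T' (fst p) (snd p)))"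
    have "sum ?g {T. T \<in> ?FT \<and> inner_shape n lam (Suc N) T = nu} = sum ?h (flagged_tableaux n (\<lambda>j. nat (nu j)) b')"
    proof (rule sum.reindex_bij_witness[where i="fill_outer n lam (Suc N) nu" and j="restrict_below (Suc N)"])
      fix T assume "T \<in> {T. T \<in> ?FT \<and> inner_shape n lam (Suc N) T = nu}"
      hence T: "T \<in> ?FT" and TN: "inner_shape n lam (Suc N) T = nu" by auto
      show "fill_outer n lam (Suc N) nu (restrict_below (Suc N) T) = T" using fill_restrict_below[OF T] TN by simp
      show "restrict_below (Suc N) T \<in> flagged_tableaux n (\<lambda>j. nat (nu j)) b'" using restrict_below_flagged[OF T] TN by simp
      show "?h (restrict_below (Suc N) T) = ?g T" using box_prod_inner_shape[OF T, of x] TN by simp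
    next
      fix T' assume T': "T' \<in> flagged_tableaux n (\<lambda>j. nat (nu j)) b'"
      show "restrict_below (Suc N) (fill_outer n lam (Suc N) nu T') = T'" by (rule restrict_fill_outer[OF nu T'])
      show "fill_outer n lam (Suc N) nu T' \<in> {T. T \<in> ?FT \<and> inner_shape n lam (Suc N) T = nu}"
        using fill_outer_flagged[OF nu T'] inner_shape_fill_outer[OF nu T'] by simp
    qed
    also have "\<dots> = ?W nu * flagged_schur n (\<lambda>j. nat (nu j)) b' x"
      unfolding flagged_schur_box_prod by (simp add: sum_distrib_left)
    finally show "sum ?g {T. T \<in> ?FT \<and> inner_shape n lam (Suc N) T = nu} = ?W nu * flagged_schur n (\<lambda>j. nat (nu j)) b' x" .
  qed
  finally show ?thesis .
qed

lemma det_jt_mat_strip_decomp: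
  fixes x :: "nat \<Rightarrow> 'a::comm_ring_1"
  shows "det (jt_mat n (\<lambda>_. 1) (\<lambda>j. int (lam j)) b x) = (\<Sum>nu\<in>strips.
      (\<Prod>j\<in>J. x (Suc N) ^ nat (int (lam j) - nu j)) * det (jt_mat n (\<lambda>_. 1) nu b' x))"
proof -
  have Jsub: "J \<subseteq> {1..n}" unfolding top_rows_def by auto
  have "det (jt_mat n (\<lambda>_. 1) (\<lambda>j. int (lam j)) b x) = (\<Sum>nu\<in>reduced_tuples n J (\<lambda>j. int (lam j)).
      (\<Prod>j\<in>J. x (Suc N) ^ nat (int (lam j) - nu j)) * det (jt_mat n (\<lambda>_. 1) nu b' x))"
    by (rule det_jt_mat_expand[OF finite_top_rows Jsub]) (auto simp: top_rows_def)
  also have "\<dots> = (\<Sum>nu\<in>strips.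
      (\<Prod>j\<in>J. x (Suc N) ^ nat (int (lam j) - nu j)) * det (jt_mat n (\<lambda>_. 1) nu b' x))"
    by (rule det_jt_mat_sum_strips[OF P Jsub]) (use top_rows_Suc in auto)
  finally show ?thesis .
qed

end

section \<open>The flagged Jacobi--Trudi identity\<close>

lemma flagged_jacobi_trudi_flag_0:
  fixes x :: "nat \<Rightarrow> 'a::comm_ring_1"
  assumes P: "is_partition n lam" and b0: "\<And>i. 1 \<le> i \<Longrightarrow> i \<le> n \<Longrightarrow> b i = 0"
  shows "flagged_schur n lam b x = det (jt_mat n (\<lambda>_. 1) (\<lambda>j. int (lam j)) b x)"
proof (cases "\<exists>i. 1 \<le> i \<and> i \<le> n \<and> 0 < lam i")
  case True
  then obtain i where i: "1 \<le> i" "i \<le> n" "0 < lam i" by blast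
  have l1: "0 < lam 1" using is_partition_antimono[OF P, of 1 i] i by simp
  have n1: "1 \<le> n" using i by simp
  have "flagged_tableaux n lam b = {}"
  proof (rule ccontr)
    assume "flagged_tableaux n lam b \<noteq> {}"
    then obtain T where T: "T \<in> flagged_tableaux n lam b" by blast
    have "(1, 1) \<in> shape n lam" using l1 n1 by (auto simp: mem_shape_iff)
    hence "T 1 1 \<in> {1..n}" "T 1 1 \<le> b 1" using T unfolding flagged_tableaux_def by auto
    thus False using b0[of 1] n1 by simp
  qed
  moreover have "det (jt_mat n (\<lambda>_. 1) (\<lambda>j. int (lam j)) b x) = 0"
    unfolding jt_mat_def
  proof (rule det_mat_zero_col[of 0])
    show "0 < n" using n1 by simp
    fix r assume "r < n"
    have "int (lam (Suc 0)) - int (Suc 0) + int (Suc r) \<noteq> 0" using l1 by simp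
    thus "hpoly (int (lam (Suc 0)) - int (Suc 0) + int (Suc r)) 1 (b (Suc 0)) x = 0"
      using b0[of 1] n1 hpoly_empty_range[of _ 0 x] by simp
  qed
  ultimately show ?thesis unfolding flagged_schur_def by simp
next
  case False
  hence l0: "\<And>i. 1 \<le> i \<Longrightarrow> i \<le> n \<Longrightarrow> lam i = 0" by auto
  have sh: "shape n lam = {}" using l0 by (auto simp: mem_shape_iff)
  have "flagged_tableaux n lam b = {\<lambda>_ _. 0}"
    unfolding flagged_tableaux_def sh by (auto simp: fun_eq_iff)
  moreover have "theta n lam (\<lambda>_ _. 0) k = 0" for k unfolding theta_def sh by simp
  moreover have "jt_mat n (\<lambda>_. 1) (\<lambda>j. int (lam j)) b x = 1\<^sub>m n"
  proof (rule eq_matI)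
    fix i j assume "i < dim_row (1\<^sub>m n :: 'a mat)" "j < dim_col (1\<^sub>m n :: 'a mat)"
    hence ij: "i < n" "j < n" by auto
    have "int (lam (Suc j)) - int (Suc j) + int (Suc i) = int i - int j" using l0[of "Suc j"] ij by simp
    thus "jt_mat n (\<lambda>_. 1) (\<lambda>j. int (lam j)) b x $$ (i, j) = 1\<^sub>m n $$ (i, j)"
      using ij b0[of "Suc j"] hpoly_empty_range[of _ 0 x] by (simp add: jt_mat_index one_mat_def)
  qed auto
  ultimately show ?thesis unfolding flagged_schur_def by simp
qed

theorem flagged_jacobi_trudi:
  fixes x :: "nat \<Rightarrow> 'a::comm_ring_1"
  assumes "N \<le> n" "is_partition n lam" "\<And>i. 1 \<le> i \<Longrightarrow> i < n \<Longrightarrow> b i \<le> b (Suc i)"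
    "\<And>i. 1 \<le> i \<Longrightarrow> i \<le> n \<Longrightarrow> b i \<le> N"
  shows "flagged_schur n lam b x = det (jt_mat n (\<lambda>_. 1) (\<lambda>j. int (lam j)) b x)"
  using assms
proof (induction N arbitrary: lam b)
  case 0
  thus ?case by (intro flagged_jacobi_trudi_flag_0) auto
next
  case (Suc N)
  note ctx = Suc.prems(2,3,4,1)
  let ?b' = "\<lambda>j. if j \<in> top_rows n b (Suc N) then N else b j"
  let ?W = "\<lambda>nu. \<Prod>j\<in>top_rows n b (Suc N). x (Suc N) ^ nat (int (lam j) - nu j)"
  let ?strips = "{nu \<in> reduced_tuples n (top_rows n b (Suc N)) (\<lambda>j. int (lam j)).
      strip_defects n lam (top_rows n b (Suc N)) nu = {}}"
  have "flagged_schur n lam b x = (\<Sum>nu\<in>?strips. ?W nu * flagged_schur n (\<lambda>j. nat (nu j)) ?b' x)"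
    by (rule flagged_schur_strip_decomp[of n lam b N, OF ctx])
  also have "\<dots> = (\<Sum>nu\<in>?strips. ?W nu * det (jt_mat n (\<lambda>_. 1) nu ?b' x))"
  proof (rule sum.cong[OF refl])
    fix nu assume nu: "nu \<in> ?strips"
    have "flagged_schur n (\<lambda>j. nat (nu j)) ?b' x = det (jt_mat n (\<lambda>_. 1) (\<lambda>j. int (nat (nu j))) ?b' x)"
      using Suc.prems(1) strips_partition[of n lam b N, OF ctx nu] lowered_mono[of n lam b N, OF ctx] lowered_le[of n lam b N, OF ctx]
      by (intro Suc.IH) auto
    also have "jt_mat n (\<lambda>_. 1) (\<lambda>j. int (nat (nu j))) ?b' x = jt_mat n (\<lambda>_. 1) nu ?b' x"
      by (rule jt_mat_cong) (use strips_props(2)[of n lam b N, OF ctx nu] in auto)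
    finally show "?W nu * flagged_schur n (\<lambda>j. nat (nu j)) ?b' x = ?W nu * det (jt_mat n (\<lambda>_. 1) nu ?b' x)"
      by simp
  qed
  also have "\<dots> = det (jt_mat n (\<lambda>_. 1) (\<lambda>j. int (lam j)) b x)"
    by (rule det_jt_mat_strip_decomp[of n lam b N, OF ctx, symmetric])
  finally show ?case .
qed

theorem corollary5p3:
  fixes n :: nat and lam beta :: "nat \<Rightarrow> nat" and x :: "nat \<Rightarrow> 'a::comm_ring_1"
  assumes "1 \<le> n"
    and "is_partition n lam"
    and "beta \<in> upper_tuples n"
    and "beta \<in> UGC n lam"
  shows "flagged_schur n lam beta x =
    det (mat n n (\<lambda>(i, j). hpoly (int (lam (Suc j)) - int (Suc j) + int (Suc i))
                                  (Suc i) (core n lam beta (Suc j)) x))"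
proof -
  have "flagged_schur n lam beta x = flagged_schur n lam (crit_flag n lam beta) x"
    by (rule flagged_schur_crit_flag[OF assms(2,3)])
  also have "\<dots> = det (jt_mat n (\<lambda>_. 1) (\<lambda>j. int (lam j)) (crit_flag n lam beta) x)"
    using crit_flag_mono[OF assms(2,4)] crit_flag_le[OF assms(3)]
    by (intro flagged_jacobi_trudi[OF order.refl assms(2)]) auto
  also have "\<dots> = det (jt_mat n (\<lambda>_. 1) (\<lambda>j. int (lam j)) (core n lam beta) x)"
    by (rule det_jt_mat_crit_flag_core[OF assms(2,3)])
  also have "\<dots> = det (jt_mat n Suc (\<lambda>j. int (lam j)) (core n lam beta) x)"
    by (rule det_jt_mat_lower_index[OF assms(1), symmetric]) (use core_ge[OF assms(3)] in auto)
  finally show ?thesis unfolding jt_mat_def .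
qed

end
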